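(* Let $P$ be the transition matrix of a reversible and ergodic Markov chain on $V$ with stationary distribution $\pi$ and mixing rate $t^*$. For the quasi-random router model for $P$ with any initial configuration of $M$ tokens, $$\left|\chi^{(T)}_w-\mu^{(T)}_w\right|\le\frac{6\pi_w}{\pi_{\min}}\,\lg(M+1)\,t^*\,\Delta$$ for all $w\in V$ and $T\ge0$.
   Context: Let $V=\{1,\dots,N\}$ and let $P\in\mathbb{R}_{\ge 0}^{N\times N}$ be an ergodic (irreducible, aperiodic) stochastic matrix with stationary distribution $\pi$; $\pi_{\min}=\min_v\pi_v$; reversible means $\pi_uP_{u,v}=\pi_vP_{v,u}$ for all $u,v$. For $v\in V$ let $\mathcal N(v)=\{u: P_{v,u}>0\}$, $\delta(v)=|\mathcal N(v)|$, $\Delta=\max_v\delta(v)$; $\lg=\log_2$. Total variation distance $d_{TV}(\xi,\zeta)=\frac12\|\xi-\zeta\|_1$; mixing time $\tau(\varepsilon)=\max_{v}\min\{t\ge0: d_{TV}(P^t_{v,\cdot},\pi)\le\varepsilon\}$; mixing rate $t^*=\tau(1/4)$. The van der Corput function $\psi$: $\psi(0)=0$ and for $i=\sum_j\beta_j(i)2^j>0$ in binary, $\psi(i)=\sum_j\beta_j(i)2^{-(j+1)}$. The quasi-random router: fix an ordering $u_1,\dots,u_{\delta(v)}$ of $\mathcal N(v)$ and set $\sigma_v(i)=u_k$ where $\sum_{j=1}^{k-1}P_{v,u_j}\le\psi(i)<\sum_{j=1}^{k}P_{v,u_j}$. Write $I_{v,u}[z,z')=|\{j\in\{z,\dots,z'-1\}:\sigma_v(j)=u\}|$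 (zero if $z'\le z$). Given $\chi^{(0)}\in\mathbb{Z}_{\ge0}^N$ with $\sum_v\chi^{(0)}_v=M$, set $Z^{(t)}_{v,u}=I_{v,u}\big[\sum_{s=0}^{t-1}\chi^{(s)}_v,\sum_{s=0}^{t}\chi^{(s)}_v\big)$, $\chi^{(t+1)}_u=\sum_vZ^{(t)}_{v,u}$, $\mu^{(0)}=\chi^{(0)}$, $\mu^{(t)}=\mu^{(0)}P^t$. *)

theory Defs
  imports Complex_Main
begin

definition stochastic :: "('v::finite \<Rightarrow> 'v \<Rightarrow> real) \<Rightarrow> bool" where
  "stochastic P \<longleftrightarrow> (\<forall>u v. P u v \<ge> 0) \<and> (\<forall>u. (\<Sum>v\<in>UNIV. P u v) = 1)"

fun mpow :: "('v::finite \<Rightarrow> 'v \<Rightarrow> real) \<Rightarrow> nat \<Rightarrow> 'v \<Rightarrow> 'v \<Rightarrow> real" where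
  "mpow P 0 = (\<lambda>u v. if u = v then 1 else 0)"
| "mpow P (Suc t) = (\<lambda>u v. \<Sum>w\<in>UNIV. mpow P t u w * P w v)"

definition irreducible_chain :: "('v::finite \<Rightarrow> 'v \<Rightarrow> real) \<Rightarrow> bool" where
  "irreducible_chain P \<longleftrightarrow> (\<forall>u v. \<exists>t. mpow P t u v > 0)"

definition aperiodic_chain :: "('v::finite \<Rightarrow> 'v \<Rightarrow> real) \<Rightarrow> bool" where
  "aperiodic_chain P \<longleftrightarrow> (\<forall>v. Gcd {t. t > 0 \<and> mpow P t v v > 0} = 1)"

definition ergodic :: "('v::finite \<Rightarrow> 'v \<Rightarrow> real) \<Rightarrow> bool" where
  "ergodic P \<longleftrightarrow> stochastic P \<and> irreducible_chain P \<and> aperiodic_chain P"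

definition stationary :: "('v::finite \<Rightarrow> 'v \<Rightarrow> real) \<Rightarrow> ('v \<Rightarrow> real) \<Rightarrow> bool" where
  "stationary P \<pi> \<longleftrightarrow> (\<forall>v. \<pi> v \<ge> 0) \<and> (\<Sum>v\<in>UNIV. \<pi> v) = 1 \<and>
     (\<forall>v. (\<Sum>u\<in>UNIV. \<pi> u * P u v) = \<pi> v)"

definition reversible :: "('v::finite \<Rightarrow> 'v \<Rightarrow> real) \<Rightarrow> ('v \<Rightarrow> real) \<Rightarrow> bool" where
  "reversible P \<pi> \<longleftrightarrow> (\<forall>u v. \<pi> u * P u v = \<pi> v * P v u)"

definition pi_min :: "('v::finite \<Rightarrow> real) \<Rightarrow> real" where
  "pi_min \<pi> = Min (range \<pi>)"

definition nbhd :: "('v::finite \<Rightarrow> 'v \<Rightarrow> real) \<Rightarrow> 'v \<Rightarrow> 'v set" where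
  "nbhd P v = {u. P v u > 0}"

definition max_degree :: "('v::finite \<Rightarrow> 'v \<Rightarrow> real) \<Rightarrow> nat" where
  "max_degree P = Max (range (\<lambda>v. card (nbhd P v)))"

definition dTV :: "('v::finite \<Rightarrow> real) \<Rightarrow> ('v \<Rightarrow> real) \<Rightarrow> real" where
  "dTV \<xi> \<zeta> = (1/2) * (\<Sum>u\<in>UNIV. \<bar>\<xi> u - \<zeta> u\<bar>)"

definition mixing_time :: "('v::finite \<Rightarrow> 'v \<Rightarrow> real) \<Rightarrow> ('v \<Rightarrow> real) \<Rightarrow> real \<Rightarrow> nat" where
  "mixing_time P \<pi> \<epsilon> = Max (range (\<lambda>v. LEAST t. dTV (mpow P t v) \<pi> \<le> \<epsilon>))"

definition mixing_rate :: "('v::finite \<Rightarrow> 'v \<Rightarrow> real) \<Rightarrow> ('v \<Rightarrow> real) \<Rightarrow> nat" where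
  "mixing_rate P \<pi> = mixing_time P \<pi> (1/4)"

(* van der Corput function: psi(sum_j beta_j 2^j) = sum_j beta_j 2^-(j+1); bits j >= i vanish *)
definition vdc :: "nat \<Rightarrow> real" where
  "vdc i = (\<Sum>j<i. real ((i div 2 ^ j) mod 2) / 2 ^ (j + 1))"

(* quasi-random router at v, with the ordering ord v = [u_1, ..., u_delta(v)] of N(v);
   sigma_v(i) = u_k with sum_{j<k} P v u_j <= psi(i) < sum_{j<=k} P v u_j (0-based k here) *)
definition router :: "('v::finite \<Rightarrow> 'v \<Rightarrow> real) \<Rightarrow> ('v \<Rightarrow> 'v list) \<Rightarrow> 'v \<Rightarrow> nat \<Rightarrow> 'v" where
  "router P ord v i = (THE u. \<exists>k < length (ord v). u = ord v ! k \<and>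
      (\<Sum>x\<leftarrow>take k (ord v). P v x) \<le> vdc i \<and> vdc i < (\<Sum>x\<leftarrow>take (Suc k) (ord v). P v x))"

definition Icount :: "('v::finite \<Rightarrow> 'v \<Rightarrow> real) \<Rightarrow> ('v \<Rightarrow> 'v list) \<Rightarrow> 'v \<Rightarrow> 'v \<Rightarrow> nat \<Rightarrow> nat \<Rightarrow> nat" where
  "Icount P ord v u z z' = card {j \<in> {z..<z'}. router P ord v j = u}"

(* state at time t: (chi^(t), cumulative sums  C_t v = sum_{s<t} chi^(s)_v) *)
fun qr_state :: "('v::finite \<Rightarrow> 'v \<Rightarrow> real) \<Rightarrow> ('v \<Rightarrow> 'v list) \<Rightarrow> ('v \<Rightarrow> nat) \<Rightarrow> nat
    \<Rightarrow> ('v \<Rightarrow> nat) \<times> ('v \<Rightarrow> nat)" where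
  "qr_state P ord chi0 0 = (chi0, (\<lambda>v. 0))"
| "qr_state P ord chi0 (Suc t) =
     (let (c, C) = qr_state P ord chi0 t; C' = (\<lambda>v. C v + c v)
      in ((\<lambda>u. \<Sum>v\<in>UNIV. Icount P ord v u (C v) (C' v)), C'))"

definition qr_chi :: "('v::finite \<Rightarrow> 'v \<Rightarrow> real) \<Rightarrow> ('v \<Rightarrow> 'v list) \<Rightarrow> ('v \<Rightarrow> nat) \<Rightarrow> nat \<Rightarrow> 'v \<Rightarrow> nat" where
  "qr_chi P ord chi0 t = fst (qr_state P ord chi0 t)"

definition qr_mu :: "('v::finite \<Rightarrow> 'v \<Rightarrow> real) \<Rightarrow> ('v \<Rightarrow> nat) \<Rightarrow> nat \<Rightarrow> 'v \<Rightarrow> real" where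
  "qr_mu P chi0 t w = (\<Sum>v\<in>UNIV. real (chi0 v) * mpow P t v w)"

end

(* The load evolves linearly up to the rounding errors of the routers: unrolling the recursion,
   chi^(T) = mu^(T) + sum_{t<T} e^(t) P^(T-1-t), where the error e^(t)_{v,u} of node v is a
   difference of two discrepancies of a window of chi^(t)_v consecutive van der Corput points, at
   the ends of the interval of cumulative probabilities assigned to u; a dyadic recursion bounds it
   by 3/2 lg(M+1).  Every error row sums to zero, so the column of P^s can be centred at pi_w; by
   reversibility its l1 distance from pi_w is at most (pi_w / pi_min) 2 d_TV(P^s_w, pi), and only
   Delta rows enter each column.  Submultiplicativity of the worst-case total variation distance
   gives d_TV(P^s_w, pi) <= 2^-floor(s/tau) for the mixing rate tau, which sums to at most 2 tau;
   so the constant is 3/2 * 2 * 2 = 6. *)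

theory Submission
  imports Defs
begin

section \<open>Powers of a transition matrix\<close>

lemma ergodic_stochastic: "ergodic P \<Longrightarrow> stochastic P"
  by (simp add: ergodic_def)

lemma mpow_nonneg:
  assumes "stochastic P" shows "mpow P t u v \<ge> 0"
  using assms
  by (induction t arbitrary: v) (auto simp: stochastic_def intro!: sum_nonneg mult_nonneg_nonneg)

lemma mpow_row_sum:
  assumes "stochastic P" shows "(\<Sum>v\<in>UNIV. mpow P t u v) = 1"
proof (induction t)
  case 0 then show ?case by simp
next
  case (Suc t)
  have "(\<Sum>v\<in>UNIV. mpow P (Suc t) u v) = (\<Sum>w\<in>UNIV. mpow P t u w * (\<Sum>v\<in>UNIV. P w v))"
    by (simp add: sum_distrib_left) (rule sum.swap)
  also have "\<dots> = 1" using assms Suc by (simp add: stochastic_def)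
  finally show ?case .
qed

lemma mpow_add: "mpow P (s + t) u v = (\<Sum>w\<in>UNIV. mpow P s u w * mpow P t w v)"
proof (induction t arbitrary: v)
  case 0 then show ?case by (simp add: if_distrib cong: if_cong)
next
  case (Suc t)
  have "mpow P (s + Suc t) u v = (\<Sum>x\<in>UNIV. (\<Sum>w\<in>UNIV. mpow P s u w * mpow P t w x) * P x v)"
    using Suc by simp
  also have "\<dots> = (\<Sum>w\<in>UNIV. mpow P s u w * (\<Sum>x\<in>UNIV. mpow P t w x * P x v))"
    by (simp add: sum_distrib_left sum_distrib_right mult.assoc) (rule sum.swap)
  finally show ?case by simp
qed

lemma mpow_one: "mpow P 1 u v = P u v"
proof -
  have "mpow P 1 u v = (\<Sum>w\<in>UNIV. if u = w then P w v else 0)"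
    by (simp add: if_distrib[of "\<lambda>c. c * _"] cong: if_cong)
  then show ?thesis by simp
qed

lemma mpow_Suc_left: "mpow P (Suc t) u v = (\<Sum>w\<in>UNIV. P u w * mpow P t w v)"
  using mpow_add[of P 1 t u v] by (simp only: mpow_one) simp

lemma mpow_add_ge:
  assumes "stochastic P"
  shows "mpow P s u w * mpow P t w v \<le> mpow P (s + t) u v"
  unfolding mpow_add
  by (rule member_le_sum) (auto intro!: mult_nonneg_nonneg mpow_nonneg assms)

lemma stationary_mpow:
  assumes "stationary P \<pi>" shows "(\<Sum>u\<in>UNIV. \<pi> u * mpow P t u v) = \<pi> v"
proof (induction t arbitrary: v)
  case 0 then show ?case by (simp add: if_distrib cong: if_cong)
next
  case (Suc t)
  have "(\<Sum>u\<in>UNIV. \<pi> u * mpow P (Suc t) u v) = (\<Sum>w\<in>UNIV. (\<Sum>u\<in>UNIV. \<pi> u * mpow P t u w) * P w v)"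
    by (simp add: sum_distrib_left sum_distrib_right mult.assoc) (rule sum.swap)
  also have "\<dots> = \<pi> v" using Suc assms by (simp add: stationary_def)
  finally show ?case .
qed

lemma reversible_mpow:
  assumes "reversible P \<pi>" shows "\<pi> u * mpow P t u v = \<pi> v * mpow P t v u"
proof (induction t arbitrary: v)
  case 0 then show ?case by simp
next
  case (Suc t)
  have "\<pi> u * mpow P (Suc t) u v = (\<Sum>x\<in>UNIV. (\<pi> u * mpow P t u x) * P x v)"
    by (simp add: sum_distrib_left mult.assoc)
  also have "\<dots> = (\<Sum>x\<in>UNIV. mpow P t x u * (\<pi> x * P x v))"
    using Suc by (simp add: mult.commute mult.left_commute)
  also have "\<dots> = (\<Sum>x\<in>UNIV. mpow P t x u * (\<pi> v * P v x))"
    using assms by (simp add: reversible_def)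
  also have "\<dots> = \<pi> v * (\<Sum>x\<in>UNIV. P v x * mpow P t x u)"
    by (simp add: sum_distrib_left mult.commute mult.left_commute)
  also have "\<dots> = \<pi> v * mpow P (Suc t) v u" by (simp only: mpow_Suc_left)
  finally show ?case .
qed

lemma stationary_pos:
  assumes "ergodic P" "stationary P \<pi>" shows "\<pi> v > 0"
proof -
  have "\<exists>u. \<pi> u > 0"
  proof (rule ccontr)
    assume "\<nexists>u. \<pi> u > 0"
    then have "(\<Sum>u\<in>UNIV. \<pi> u) \<le> 0" by (simp add: sum_nonpos not_less)
    with assms(2) show False by (simp add: stationary_def)
  qed
  then obtain u where u: "\<pi> u > 0" ..
  obtain t where t: "mpow P t u v > 0"
    using assms(1) by (auto simp: ergodic_def irreducible_chain_def)
  have "\<pi> u * mpow P t u v \<le> (\<Sum>x\<in>UNIV. \<pi> x * mpow P t x v)"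
    using assms ergodic_stochastic
    by (intro member_le_sum) (auto intro!: mult_nonneg_nonneg mpow_nonneg simp: stationary_def)
  also have "\<dots> = \<pi> v" by (rule stationary_mpow[OF assms(2)])
  finally show ?thesis using mult_pos_pos[OF u t] by linarith
qed

section \<open>Total variation distance and contraction\<close>

lemma dTV_nonneg: "dTV a b \<ge> 0"
  unfolding dTV_def by (auto intro!: sum_nonneg)

lemma dTV_commute: "dTV a b = dTV b a"
  unfolding dTV_def by (simp add: abs_minus_commute)

lemma dTV_triangle: "dTV a c \<le> dTV a b + dTV b c"
proof -
  have "(\<Sum>u\<in>UNIV. \<bar>a u - c u\<bar>) \<le> (\<Sum>u\<in>UNIV. \<bar>a u - b u\<bar> + \<bar>b u - c u\<bar>)"
    by (rule sum_mono) linarith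
  then show ?thesis unfolding dTV_def by (simp add: sum.distrib)
qed

lemma dTV_le_1:
  assumes "\<forall>u. a u \<ge> 0" "\<forall>u. b u \<ge> 0" "(\<Sum>u\<in>UNIV. a u) = 1" "(\<Sum>u\<in>UNIV. b u) = 1"
  shows "dTV a b \<le> 1"
proof -
  have "(\<Sum>u\<in>UNIV. \<bar>a u - b u\<bar>) \<le> (\<Sum>u\<in>UNIV. a u + b u)"
    by (rule sum_mono) (use assms in \<open>auto simp: abs_le_iff\<close>)
  then show ?thesis using assms unfolding dTV_def by (simp add: sum.distrib)
qed

lemma dTV_less_1_if_pos:
  assumes "\<forall>u. a u > 0" "\<forall>u. b u > 0" "(\<Sum>u\<in>UNIV. a u) = 1" "(\<Sum>u\<in>UNIV. b u) = 1"
  shows "dTV a b < 1"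
proof -
  have "\<bar>a u - b u\<bar> = a u + b u - 2 * min (a u) (b u)" for u by (simp add: min_def abs_if)
  then have "(\<Sum>u\<in>UNIV. \<bar>a u - b u\<bar>) = 2 - 2 * (\<Sum>u\<in>UNIV. min (a u) (b u))"
    using assms by (simp add: sum_subtractf sum.distrib sum_distrib_left)
  moreover have "(\<Sum>u\<in>UNIV. min (a u) (b u)) > 0" by (rule sum_pos) (use assms in auto)
  ultimately show ?thesis unfolding dTV_def by simp
qed

lemma l1_mult_stochastic_le:
  fixes a :: "'v::finite \<Rightarrow> real"
  assumes "stochastic Q"
  shows "(\<Sum>u\<in>UNIV. \<bar>\<Sum>y\<in>UNIV. a y * Q y u\<bar>) \<le> (\<Sum>y\<in>UNIV. \<bar>a y\<bar>)"
proof -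
  have "(\<Sum>u\<in>UNIV. \<bar>\<Sum>y\<in>UNIV. a y * Q y u\<bar>) \<le> (\<Sum>u\<in>UNIV. \<Sum>y\<in>UNIV. \<bar>a y\<bar> * Q y u)"
    by (rule sum_mono, rule order_trans[OF sum_abs]) (use assms in \<open>simp add: abs_mult stochastic_def\<close>)
  also have "\<dots> = (\<Sum>y\<in>UNIV. \<bar>a y\<bar> * (\<Sum>u\<in>UNIV. Q y u))"
    by (subst sum.swap) (simp add: sum_distrib_left)
  also have "\<dots> = (\<Sum>y\<in>UNIV. \<bar>a y\<bar>)" using assms by (simp add: stochastic_def)
  finally show ?thesis .
qed

lemma dTV_mult_stochastic_le:
  fixes a b :: "'v::finite \<Rightarrow> real"
  assumes "stochastic Q"
  shows "dTV (\<lambda>u. \<Sum>y\<in>UNIV. a y * Q y u) (\<lambda>u. \<Sum>y\<in>UNIV. b y * Q y u) \<le> dTV a b"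
proof -
  have "(\<Sum>u\<in>UNIV. \<bar>(\<Sum>y\<in>UNIV. a y * Q y u) - (\<Sum>y\<in>UNIV. b y * Q y u)\<bar>)
      = (\<Sum>u\<in>UNIV. \<bar>\<Sum>y\<in>UNIV. (a y - b y) * Q y u\<bar>)"
    by (simp add: sum_subtractf left_diff_distrib)
  also have "\<dots> \<le> (\<Sum>y\<in>UNIV. \<bar>a y - b y\<bar>)" by (rule l1_mult_stochastic_le[OF assms])
  finally show ?thesis unfolding dTV_def by simp
qed

lemma sum_coupling_eq:
  fixes p m :: "'v::finite \<Rightarrow> real"
  shows "(\<Sum>z\<in>UNIV. \<Sum>z'\<in>UNIV. p z * m z' * (f z - f z'))
       = (\<Sum>z'\<in>UNIV. m z') * (\<Sum>z\<in>UNIV. p z * f z) - (\<Sum>z\<in>UNIV. p z) * (\<Sum>z'\<in>UNIV. m z' * f z')"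
  by (simp add: right_diff_distrib sum_subtractf sum_distrib_left sum_distrib_right ac_simps)
    (rule sum.swap)

text \<open>Dobrushin's contraction: a signed vector of total mass zero is split into its positive and
  negative parts of equal mass \<open>S\<close>, and the two parts are coupled by the product measure.\<close>

lemma l1_zero_sum_mult_le:
  fixes a :: "'v::finite \<Rightarrow> real" and Q :: "'v \<Rightarrow> 'v \<Rightarrow> real"
  assumes zero_sum: "(\<Sum>z\<in>UNIV. a z) = 0"
    and rows_close: "\<And>z z'. (\<Sum>u\<in>UNIV. \<bar>Q z u - Q z' u\<bar>) \<le> 2 * \<delta>"
  shows "(\<Sum>u\<in>UNIV. \<bar>\<Sum>z\<in>UNIV. a z * Q z u\<bar>) \<le> \<delta> * (\<Sum>z\<in>UNIV. \<bar>a z\<bar>)"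
proof -
  define p where "p z = max (a z) 0" for z
  define m where "m z = max (- a z) 0" for z
  define S where "S = (\<Sum>z\<in>UNIV. p z)"
  have a_eq: "a z = p z - m z" and abs_a: "\<bar>a z\<bar> = p z + m z" and pm: "p z \<ge> 0" "m z \<ge> 0" for z
    unfolding p_def m_def by auto
  have sum_m: "(\<Sum>z\<in>UNIV. m z) = S"
    using zero_sum by (simp add: a_eq sum_subtractf S_def)
  have sum_abs_a: "(\<Sum>z\<in>UNIV. \<bar>a z\<bar>) = 2 * S"
    using sum_m by (simp add: abs_a sum.distrib S_def)
  have coupling: "S * (\<Sum>z\<in>UNIV. a z * Q z u) = (\<Sum>z\<in>UNIV. \<Sum>z'\<in>UNIV. p z * m z' * (Q z u - Q z' u))"
    for u unfolding sum_coupling_eq sum_m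
    by (simp add: S_def a_eq left_diff_distrib sum_subtractf right_diff_distrib)
  have "S * (\<Sum>u\<in>UNIV. \<bar>\<Sum>z\<in>UNIV. a z * Q z u\<bar>)
      \<le> (\<Sum>u\<in>UNIV. \<Sum>z\<in>UNIV. \<Sum>z'\<in>UNIV. p z * m z' * \<bar>Q z u - Q z' u\<bar>)"
  proof -
    have "S * \<bar>\<Sum>z\<in>UNIV. a z * Q z u\<bar> \<le> (\<Sum>z\<in>UNIV. \<Sum>z'\<in>UNIV. p z * m z' * \<bar>Q z u - Q z' u\<bar>)" for u
    proof -
      have "S \<ge> 0" unfolding S_def using pm by (simp add: sum_nonneg)
      then have "S * \<bar>\<Sum>z\<in>UNIV. a z * Q z u\<bar> = \<bar>\<Sum>z\<in>UNIV. \<Sum>z'\<in>UNIV. p z * m z' * (Q z u - Q z' u)\<bar>"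
        by (simp add: coupling[symmetric] abs_mult)
      also have "\<dots> \<le> (\<Sum>z\<in>UNIV. \<Sum>z'\<in>UNIV. \<bar>p z * m z' * (Q z u - Q z' u)\<bar>)"
        by (rule order_trans[OF sum_abs], rule sum_mono, rule sum_abs)
      finally show ?thesis using pm by (simp add: abs_mult)
    qed
    then show ?thesis by (simp add: sum_distrib_left sum_mono)
  qed
  also have "\<dots> = (\<Sum>z\<in>UNIV. \<Sum>z'\<in>UNIV. p z * m z' * (\<Sum>u\<in>UNIV. \<bar>Q z u - Q z' u\<bar>))"
    by (subst sum.swap, rule sum.cong[OF refl], subst sum.swap) (simp add: sum_distrib_left)
  also have "\<dots> \<le> (\<Sum>z\<in>UNIV. \<Sum>z'\<in>UNIV. p z * m z' * (2 * \<delta>))"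
    by (intro sum_mono mult_left_mono rows_close) (simp add: pm)
  also have "\<dots> = S * (\<delta> * (\<Sum>z\<in>UNIV. \<bar>a z\<bar>))"
    by (simp add: sum_abs_a sum_distrib_right[symmetric] sum_distrib_left[symmetric] sum_m S_def)
  finally have le: "S * (\<Sum>u\<in>UNIV. \<bar>\<Sum>z\<in>UNIV. a z * Q z u\<bar>) \<le> S * (\<delta> * (\<Sum>z\<in>UNIV. \<bar>a z\<bar>))" .
  show ?thesis
  proof (cases "S = 0")
    case True
    then have "p z = 0" "m z = 0" for z
      using sum_m pm unfolding S_def by (simp_all add: sum_nonneg_eq_0_iff)
    then show ?thesis by (simp add: a_eq)
  next
    case False
    then have "S > 0" unfolding S_def using pm by (simp add: sum_nonneg less_le)
    with le show ?thesis by simp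
  qed
qed

definition dist_to_pi :: "('v::finite \<Rightarrow> 'v \<Rightarrow> real) \<Rightarrow> ('v \<Rightarrow> real) \<Rightarrow> nat \<Rightarrow> 'v \<Rightarrow> real" where
  "dist_to_pi P \<pi> t x = dTV (mpow P t x) \<pi>"

definition max_row_dist :: "('v::finite \<Rightarrow> 'v \<Rightarrow> real) \<Rightarrow> nat \<Rightarrow> real" where
  "max_row_dist P t = Max ((\<lambda>(x, y). dTV (mpow P t x) (mpow P t y)) ` UNIV)"

lemma dTV_le_max_row_dist: "dTV (mpow P t x) (mpow P t y) \<le> max_row_dist P t"
  unfolding max_row_dist_def by (rule Max_ge) auto

lemma max_row_dist_attained: "\<exists>x y. max_row_dist P t = dTV (mpow P t x) (mpow P t y)"
proof -
  have "max_row_dist P t \<in> (\<lambda>(x, y). dTV (mpow P t x) (mpow P t y)) ` UNIV"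
    unfolding max_row_dist_def by (rule Max_in) auto
  then show ?thesis by auto
qed

lemma max_row_dist_nonneg: "max_row_dist P t \<ge> 0"
  using dTV_le_max_row_dist[of P t] dTV_nonneg by (meson order_trans)

context
  fixes P :: "'v::finite \<Rightarrow> 'v \<Rightarrow> real"
  assumes stochastic: "stochastic P"
begin

lemma max_row_dist_le_1: "max_row_dist P t \<le> 1"
proof -
  obtain x y where "max_row_dist P t = dTV (mpow P t x) (mpow P t y)"
    using max_row_dist_attained by blast
  also have "\<dots> \<le> 1" by (rule dTV_le_1) (use stochastic in \<open>auto simp: mpow_nonneg mpow_row_sum\<close>)
  finally show ?thesis .
qed

lemma max_row_dist_Suc_le: "max_row_dist P (Suc t) \<le> max_row_dist P t"
proof -
  obtain x y where "max_row_dist P (Suc t) = dTV (mpow P (Suc t) x) (mpow P (Suc t) y)"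
    using max_row_dist_attained by blast
  also have "\<dots> \<le> dTV (mpow P t x) (mpow P t y)"
    unfolding mpow.simps by (rule dTV_mult_stochastic_le[OF stochastic])
  also have "\<dots> \<le> max_row_dist P t" by (rule dTV_le_max_row_dist)
  finally show ?thesis .
qed

lemma max_row_dist_antimono: "s \<le> t \<Longrightarrow> max_row_dist P t \<le> max_row_dist P s"
  by (induction t rule: dec_induct) (auto intro: order_trans[OF max_row_dist_Suc_le])

lemma dist_to_pi_Suc_le:
  assumes "stationary P \<pi>"
  shows "dist_to_pi P \<pi> (Suc t) x \<le> dist_to_pi P \<pi> t x"
proof -
  have "\<pi> = (\<lambda>u. \<Sum>y\<in>UNIV. \<pi> y * P y u)" using assms by (auto simp: stationary_def)
  then have "dist_to_pi P \<pi> (Suc t) x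
      = dTV (\<lambda>u. \<Sum>y\<in>UNIV. mpow P t x y * P y u) (\<lambda>u. \<Sum>y\<in>UNIV. \<pi> y * P y u)"
    unfolding dist_to_pi_def mpow.simps by metis
  also have "\<dots> \<le> dist_to_pi P \<pi> t x"
    unfolding dist_to_pi_def by (rule dTV_mult_stochastic_le[OF stochastic])
  finally show ?thesis .
qed

lemma dist_to_pi_antimono:
  assumes "stationary P \<pi>" "s \<le> t"
  shows "dist_to_pi P \<pi> t x \<le> dist_to_pi P \<pi> s x"
  using assms(2)
  by (induction t rule: dec_induct) (auto intro: order_trans[OF dist_to_pi_Suc_le[OF assms(1)]])

lemma dist_to_pi_le_max_row_dist:
  assumes "stationary P \<pi>"
  shows "dist_to_pi P \<pi> t w \<le> max_row_dist P t"
proof -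
  have pi_sum: "(\<Sum>y\<in>UNIV. \<pi> y) = 1" and pi_nonneg: "\<forall>y. \<pi> y \<ge> 0"
    using assms by (auto simp: stationary_def)
  have avg: "mpow P t w u - \<pi> u = (\<Sum>y\<in>UNIV. \<pi> y * (mpow P t w u - mpow P t y u))" for u
    using pi_sum stationary_mpow[OF assms, of t u]
    by (simp add: right_diff_distrib sum_subtractf sum_distrib_right[symmetric])
  have "(\<Sum>u\<in>UNIV. \<bar>mpow P t w u - \<pi> u\<bar>)
      \<le> (\<Sum>u\<in>UNIV. \<Sum>y\<in>UNIV. \<pi> y * \<bar>mpow P t w u - mpow P t y u\<bar>)"
    unfolding avg by (rule sum_mono, rule order_trans[OF sum_abs]) (simp add: abs_mult pi_nonneg)
  also have "\<dots> = (\<Sum>y\<in>UNIV. \<pi> y * (2 * dTV (mpow P t w) (mpow P t y)))"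
    by (subst sum.swap) (simp add: dTV_def sum_distrib_left)
  also have "\<dots> \<le> (\<Sum>y\<in>UNIV. \<pi> y * (2 * max_row_dist P t))"
    by (intro sum_mono mult_left_mono) (simp_all add: dTV_le_max_row_dist pi_nonneg)
  also have "\<dots> = 2 * max_row_dist P t" using pi_sum by (simp add: sum_distrib_right[symmetric])
  finally show ?thesis unfolding dist_to_pi_def dTV_def by simp
qed

lemma max_row_dist_add_le: "max_row_dist P (s + t) \<le> max_row_dist P s * max_row_dist P t"
proof -
  obtain x y where xy: "max_row_dist P (s + t) = dTV (mpow P (s + t) x) (mpow P (s + t) y)"
    using max_row_dist_attained by blast
  define a where "a z = mpow P s x z - mpow P s y z" for z
  have diff: "mpow P (s + t) x u - mpow P (s + t) y u = (\<Sum>z\<in>UNIV. a z * mpow P t z u)" for u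
    unfolding a_def mpow_add by (simp add: sum_subtractf left_diff_distrib)
  have "2 * max_row_dist P (s + t) = (\<Sum>u\<in>UNIV. \<bar>\<Sum>z\<in>UNIV. a z * mpow P t z u\<bar>)"
    unfolding xy dTV_def diff by simp
  also have "\<dots> \<le> max_row_dist P t * (\<Sum>z\<in>UNIV. \<bar>a z\<bar>)"
  proof (rule l1_zero_sum_mult_le)
    show "(\<Sum>z\<in>UNIV. a z) = 0"
      using stochastic unfolding a_def by (simp add: sum_subtractf mpow_row_sum)
    show "(\<Sum>u\<in>UNIV. \<bar>mpow P t z u - mpow P t z' u\<bar>) \<le> 2 * max_row_dist P t" for z z'
      using dTV_le_max_row_dist[of P t z z'] unfolding dTV_def by simp
  qed
  also have "\<dots> \<le> max_row_dist P t * (2 * max_row_dist P s)"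
    using dTV_le_max_row_dist[of P s x y] max_row_dist_nonneg[of P t]
    unfolding dTV_def a_def by (intro mult_left_mono) simp_all
  finally show ?thesis by (simp add: mult.commute)
qed

lemma max_row_dist_mult_le: "max_row_dist P (k * t) \<le> max_row_dist P t ^ k"
proof (induction k)
  case 0 then show ?case using max_row_dist_le_1[of 0] by simp
next
  case (Suc k)
  have "max_row_dist P (Suc k * t) \<le> max_row_dist P (k * t) * max_row_dist P t"
    using max_row_dist_add_le[of "k * t" t] by (simp add: add.commute)
  also have "\<dots> \<le> max_row_dist P t ^ k * max_row_dist P t"
    using Suc max_row_dist_nonneg by (rule mult_right_mono)
  finally show ?case by (simp add: mult.commute)
qed

end

section \<open>Ergodic chains mix\<close>

locale nat_add_closed =
  fixes S :: "nat set"
  assumes add_closed: "\<And>a b. a \<in> S \<Longrightarrow> b \<in> S \<Longrightarrow> a + b \<in> S"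
begin

lemma add_mem_insert_0: "a \<in> insert 0 S \<Longrightarrow> b \<in> insert 0 S \<Longrightarrow> a + b \<in> insert 0 S"
  using add_closed by auto

lemma mult_mem_insert_0: "a \<in> insert 0 S \<Longrightarrow> k * a \<in> insert 0 S"
  by (induction k) (auto intro: add_closed)

lemma sum_mult_mem_insert_0:
  assumes "finite F" "F \<subseteq> S" shows "(\<Sum>f\<in>F. c f * f) \<in> insert 0 S"
  using assms
proof (induction F rule: finite_induct)
  case (insert x F)
  then have "c x * x + (\<Sum>f\<in>F. c f * f) \<in> insert 0 S"
    by (intro add_mem_insert_0 mult_mem_insert_0) auto
  with insert.hyps show ?case by simp
qed simp

lemma ge_square_mem:
  assumes "b \<in> S" "b + 1 \<in> S" "b \<ge> 1" "n \<ge> b * b"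
  shows "n \<in> S"
proof -
  define q r where "q = n div b" and "r = n mod b"
  have n: "n = q * b + r" and "r < b" unfolding q_def r_def using assms(3) by simp_all
  have "b \<le> q"
  proof (rule ccontr)
    assume "\<not> b \<le> q"
    then have "(q + 1) * b \<le> b * b" by (intro mult_le_mono1) simp
    with assms(4) n \<open>r < b\<close> show False by (simp add: algebra_simps)
  qed
  then have "n = (q - r) * b + r * (b + 1)"
    using n \<open>r < b\<close> by (simp add: algebra_simps diff_mult_distrib)
  moreover have "(q - r) * b \<in> insert 0 S" using assms(1) by (intro mult_mem_insert_0) simp
  moreover have "r * (b + 1) \<in> insert 0 S" using assms(2) by (intro mult_mem_insert_0) simp
  ultimately have "n \<in> insert 0 S" by (simp only: add_mem_insert_0)
  moreover have "n \<noteq> 0" using assms(3,4) by (metis le_0_eq mult_is_0 not_one_le_zero)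
  ultimately show ?thesis by simp
qed

end

lemma Gcd_finite_bezout:
  fixes F :: "nat set"
  assumes "finite F"
  shows "\<exists>c. (\<Sum>f\<in>F. c f * int f) = int (Gcd F)"
  using assms
proof (induction F rule: finite_induct)
  case (insert x F)
  obtain c where c: "(\<Sum>f\<in>F. c f * int f) = int (Gcd F)" using insert by blast
  obtain u v where uv: "u * int x + v * int (Gcd F) = gcd (int x) (int (Gcd F))"
    using bezout_int by blast
  define c' where "c' f = (if f = x then u else v * c f)" for f
  have "(\<Sum>f\<in>insert x F. c' f * int f) = u * int x + (\<Sum>f\<in>F. v * c f * int f)"
    using insert by (simp add: c'_def) (rule sum.cong, auto)
  also have "(\<Sum>f\<in>F. v * c f * int f) = v * int (Gcd F)"
    using c by (simp add: sum_distrib_left[symmetric] mult.assoc)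
  finally show ?case using uv by auto
qed simp

text \<open>The gcds of the initial segments \<open>S \<inter> {..n}\<close> form a divisibility chain; its eventual value
  divides every element of \<open>S\<close>.\<close>

lemma Gcd_eq_1_initial_segment:
  fixes S :: "nat set"
  assumes "Gcd S = 1"
  shows "\<exists>n. Gcd (S \<inter> {..n}) = 1"
proof -
  obtain a where a: "a \<in> S" "a \<noteq> 0" using assms Gcd_0_iff[of S] by auto
  define g where "g n = Gcd (S \<inter> {..n})" for n
  have g_pos: "g n > 0" if "n \<ge> a" for n
  proof -
    have "\<not> S \<inter> {..n} \<subseteq> {0}" using a that by auto
    then show ?thesis unfolding g_def using Gcd_0_iff[of "S \<inter> {..n}"] by auto
  qed
  have g_dvd: "g n dvd g n'" if "n' \<le> n" for n n'
    unfolding g_def using that by (intro Gcd_greatest Gcd_dvd) auto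
  define v where "v = (LEAST v. \<exists>n\<ge>a. g n = v)"
  obtain n0 where n0: "n0 \<ge> a" "g n0 = v"
    using LeastI[of "\<lambda>v. \<exists>n\<ge>a. g n = v" "g a"] unfolding v_def by blast
  have "v dvd s" if "s \<in> S" for s
  proof -
    define n1 where "n1 = max n0 s"
    have "g n1 dvd v" using g_dvd[of n0 n1] n0 unfolding n1_def by simp
    moreover have "v \<le> g n1" unfolding v_def by (rule Least_le, rule exI[of _ n1]) (use n0 in \<open>auto simp: n1_def\<close>)
    ultimately have "g n1 = v" using g_pos n0 by (metis dvd_imp_le le_antisym)
    moreover have "g n1 dvd s" unfolding g_def n1_def by (rule Gcd_dvd) (use that in auto)
    ultimately show ?thesis by simp
  qed
  then have "v dvd Gcd S" by (rule Gcd_greatest)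
  then show ?thesis using assms n0 unfolding g_def by auto
qed

text \<open>Bezout gives \<open>A = B + 1\<close> with \<open>A, B\<close> nonnegative combinations of elements of \<open>S\<close>; all
  \<open>n \<ge> B\<^sup>2\<close> are then combinations of \<open>B\<close> and \<open>B + 1\<close>.\<close>

lemma (in nat_add_closed) Gcd_eq_1_eventually_mem:
  assumes "Gcd S = 1"
  shows "\<exists>N. \<forall>n\<ge>N. n \<in> S"
proof -
  obtain n where "Gcd (S \<inter> {..n}) = 1" using Gcd_eq_1_initial_segment[OF assms] by blast
  moreover define F where "F = S \<inter> {..n}"
  ultimately obtain c where c: "(\<Sum>f\<in>F. c f * int f) = 1"
    using Gcd_finite_bezout[of F] by auto
  have F: "finite F" "F \<subseteq> S" unfolding F_def by auto
  define A where "A = (\<Sum>f\<in>F. nat (max (c f) 0) * f)"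
  define B where "B = (\<Sum>f\<in>F. nat (max (- c f) 0) * f)"
  have "int A - int B = (\<Sum>f\<in>F. (int (nat (max (c f) 0)) - int (nat (max (- c f) 0))) * int f)"
    unfolding A_def B_def by (simp add: sum_subtractf left_diff_distrib)
  also have "\<dots> = 1" unfolding c[symmetric] by (rule sum.cong) auto
  finally have AB: "A = B + 1" by simp
  have "A \<in> insert 0 S" "B \<in> insert 0 S"
    unfolding A_def B_def by (rule sum_mult_mem_insert_0[OF F])+
  then have B1: "B + 1 \<in> S" using AB by simp
  show ?thesis
  proof (cases "B = 0")
    case True
    then have "n \<in> S" if "n \<ge> 1" for n
      using B1 mult_mem_insert_0[of 1 n] that by simp
    then show ?thesis by blast
  next
    case False
    then have "B \<in> S" using \<open>B \<in> insert 0 S\<close> by simp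
    then have "n \<in> S" if "n \<ge> B * B" for n
      using ge_square_mem[OF _ B1 _ that] False by simp
    then show ?thesis by blast
  qed
qed

lemma ergodic_return_eventually:
  assumes "ergodic P"
  shows "\<exists>N. \<forall>n\<ge>N. mpow P n v v > 0"
proof -
  define S where "S = {t. t > 0 \<and> mpow P t v v > 0}"
  interpret nat_add_closed S
  proof
    fix a b assume "a \<in> S" "b \<in> S"
    then have "0 < mpow P a v v * mpow P b v v" by (simp add: S_def)
    also have "\<dots> \<le> mpow P (a + b) v v" by (rule mpow_add_ge[OF ergodic_stochastic[OF assms]])
    finally show "a + b \<in> S" using \<open>a \<in> S\<close> by (simp add: S_def)
  qed
  have "Gcd S = 1" using assms by (simp add: ergodic_def aperiodic_chain_def S_def)
  then show ?thesis using Gcd_eq_1_eventually_mem by (auto simp: S_def)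
qed

lemma ergodic_mpow_pos:
  assumes "ergodic P"
  shows "\<exists>t. \<forall>x y. mpow P t x y > 0"
proof -
  obtain N where N: "\<And>x n. n \<ge> N x \<Longrightarrow> mpow P n x x > 0"
    using ergodic_return_eventually[OF assms] by metis
  obtain f where f: "\<And>x y. mpow P (f x y) x y > 0"
    using assms by (metis ergodic_def irreducible_chain_def)
  define N' where "N' = Max (range N)"
  define T where "T = Max (range (case_prod f))"
  have "mpow P (N' + T) x y > 0" for x y
  proof -
    have fT: "f x y \<le> T" unfolding T_def by (rule Max_ge, simp, rule range_eqI[of _ _ "(x, y)"]) simp
    moreover have "N x \<le> N'" unfolding N'_def by (rule Max_ge) auto
    ultimately have "0 < mpow P (N' + T - f x y) x x * mpow P (f x y) x y" by (simp add: N f)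
    also have "\<dots> \<le> mpow P (N' + T - f x y + f x y) x y"
      by (rule mpow_add_ge[OF ergodic_stochastic[OF assms]])
    finally show ?thesis using fT by simp
  qed
  then show ?thesis by blast
qed

lemma sum_half_pow_div_le:
  assumes "r \<ge> 1"
  shows "(\<Sum>s<T. (1/2::real) ^ (s div r)) \<le> 2 * real r"
proof -
  have "(\<Sum>s<T. (1/2::real) ^ (s div r)) \<le> (\<Sum>s<T * r. (1/2::real) ^ (s div r))"
    by (rule sum_mono2) (use assms in auto)
  also have "\<dots> = (\<Sum>m<T. \<Sum>s\<in>{m * r..<m * r + r}. (1/2::real) ^ (s div r))"
    by (rule sum.nat_group[symmetric])
  also have "\<dots> = (\<Sum>m<T. real r * (1/2) ^ m)"
  proof (rule sum.cong[OF refl])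
    fix m
    have "s div r = m" if "s \<in> {m * r..<m * r + r}" for s
      using that assms by (auto intro: div_nat_eqI simp: algebra_simps)
    then show "(\<Sum>s\<in>{m * r..<m * r + r}. (1/2::real) ^ (s div r)) = real r * (1/2) ^ m" by simp
  qed
  also have "\<dots> = real r * (2 - 2 * (1/2) ^ T)"
    by (simp add: sum_distrib_left[symmetric]) (induction T, auto)
  also have "\<dots> \<le> 2 * real r" using mult_left_mono[of "2 - 2 * (1/2) ^ T" 2 "real r"] by simp
  finally show ?thesis .
qed

locale ergodic_chain =
  fixes P :: "'v::finite \<Rightarrow> 'v \<Rightarrow> real" and \<pi> :: "'v \<Rightarrow> real"
  assumes ergodic: "ergodic P" and stationary: "stationary P \<pi>"
begin

lemma stochastic: "stochastic P"
  by (rule ergodic_stochastic[OF ergodic])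

lemma pi_pos: "\<pi> v > 0"
  by (rule stationary_pos[OF ergodic stationary])

lemma dist_to_pi_eventually_le:
  assumes "\<epsilon> > 0"
  shows "\<exists>t. dist_to_pi P \<pi> t x \<le> \<epsilon>"
proof -
  obtain t0 where t0: "\<And>x y. mpow P t0 x y > 0" using ergodic_mpow_pos[OF ergodic] by blast
  define q where "q = max_row_dist P t0"
  have "q < 1"
    using max_row_dist_attained[of P t0] dTV_less_1_if_pos t0 mpow_row_sum[OF stochastic]
    unfolding q_def by metis
  then have "(\<lambda>k. q ^ k) \<longlonglongrightarrow> 0"
    by (intro LIMSEQ_power_zero) (simp add: q_def max_row_dist_nonneg)
  then obtain k where "q ^ k < \<epsilon>"
    using assms by (metis eventually_sequentially order_refl order_tendstoD(2))
  have "dist_to_pi P \<pi> (k * t0) x \<le> max_row_dist P (k * t0)"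
    by (rule dist_to_pi_le_max_row_dist[OF stochastic stationary])
  also have "\<dots> \<le> q ^ k" unfolding q_def by (rule max_row_dist_mult_le[OF stochastic])
  finally show ?thesis using \<open>q ^ k < \<epsilon>\<close> by (meson less_imp_le order_trans)
qed

lemma dist_to_pi_mixing_rate: "dist_to_pi P \<pi> (mixing_rate P \<pi>) x \<le> 1/4"
proof -
  define t where "t = (LEAST t. dTV (mpow P t x) \<pi> \<le> 1/4)"
  have "dist_to_pi P \<pi> t x \<le> 1/4"
    using LeastI_ex[OF dist_to_pi_eventually_le[of "1/4" x]] unfolding t_def dist_to_pi_def by simp
  moreover have "t \<le> mixing_rate P \<pi>"
    unfolding mixing_rate_def mixing_time_def t_def by (rule Max_ge) auto
  ultimately show ?thesis
    using dist_to_pi_antimono[OF stochastic stationary, of t "mixing_rate P \<pi>" x] by simp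
qed

lemma max_row_dist_mixing_rate: "max_row_dist P (mixing_rate P \<pi>) \<le> 1/2"
proof -
  obtain x y where "max_row_dist P (mixing_rate P \<pi>)
      = dTV (mpow P (mixing_rate P \<pi>) x) (mpow P (mixing_rate P \<pi>) y)"
    using max_row_dist_attained by blast
  also have "\<dots> \<le> dTV (mpow P (mixing_rate P \<pi>) x) \<pi> + dTV \<pi> (mpow P (mixing_rate P \<pi>) y)"
    by (rule dTV_triangle)
  also have "\<dots> \<le> 1/2"
    using dist_to_pi_mixing_rate[of x] dist_to_pi_mixing_rate[of y]
    unfolding dist_to_pi_def by (simp add: dTV_commute)
  finally show ?thesis .
qed

lemma dist_to_pi_le_half_pow:
  assumes "k * mixing_rate P \<pi> \<le> s"
  shows "dist_to_pi P \<pi> s w \<le> (1/2) ^ k"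
proof -
  have "dist_to_pi P \<pi> s w \<le> max_row_dist P s"
    by (rule dist_to_pi_le_max_row_dist[OF stochastic stationary])
  also have "\<dots> \<le> max_row_dist P (k * mixing_rate P \<pi>)"
    by (rule max_row_dist_antimono[OF stochastic assms])
  also have "\<dots> \<le> max_row_dist P (mixing_rate P \<pi>) ^ k"
    by (rule max_row_dist_mult_le[OF stochastic])
  also have "\<dots> \<le> (1/2) ^ k"
    by (rule power_mono[OF max_row_dist_mixing_rate max_row_dist_nonneg])
  finally show ?thesis .
qed

text \<open>For mixing rate \<open>0\<close> the geometric bound is void; instead \<open>d = max_row_dist P 0\<close> satisfies
  \<open>d \<le> 1/2\<close> and \<open>d \<le> d\<^sup>2\<close>, hence \<open>d = 0\<close>.\<close>

lemma sum_dist_to_pi_le: "(\<Sum>s<T. dist_to_pi P \<pi> s w) \<le> 2 * real (mixing_rate P \<pi>)"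
proof (cases "mixing_rate P \<pi> = 0")
  case True
  have "max_row_dist P 0 \<le> max_row_dist P 0 * max_row_dist P 0"
    using max_row_dist_add_le[OF stochastic, of 0 0] by simp
  also have "\<dots> \<le> max_row_dist P 0 * (1/2)"
    by (rule mult_left_mono[OF _ max_row_dist_nonneg]) (use max_row_dist_mixing_rate True in simp)
  finally have "max_row_dist P 0 = 0" using max_row_dist_nonneg[of P 0] by linarith
  then have "dist_to_pi P \<pi> s w \<le> 0" for s
    using dist_to_pi_le_max_row_dist[OF stochastic stationary, of s w]
      max_row_dist_antimono[OF stochastic, of 0 s] by simp
  then show ?thesis by (simp add: sum_nonpos True)
next
  case False
  have "(\<Sum>s<T. dist_to_pi P \<pi> s w) \<le> (\<Sum>s<T. (1/2::real) ^ (s div mixing_rate P \<pi>))"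
    by (intro sum_mono dist_to_pi_le_half_pow) simp
  also have "\<dots> \<le> 2 * real (mixing_rate P \<pi>)" by (rule sum_half_pow_div_le) (use False in simp)
  finally show ?thesis .
qed

end

section \<open>Discrepancy of the van der Corput sequence\<close>

lemma vdc_eq_sum_bits:
  assumes "i \<le> L"
  shows "vdc i = (\<Sum>j<L. real ((i div 2 ^ j) mod 2) / 2 ^ (j + 1))"
proof -
  define b where "b j = real ((i div 2 ^ j) mod 2) / 2 ^ (j + 1)" for j
  have "i div 2 ^ j = 0" if "j \<ge> i" for j
  proof -
    have "i < 2 ^ i" by (rule less_exp)
    also have "\<dots> \<le> 2 ^ j" using that by simp
    finally show ?thesis by simp
  qed
  then have "(\<Sum>j\<in>{i..<L}. b j) = 0" by (simp add: b_def)
  moreover have "(\<Sum>j<L. b j) = (\<Sum>j<i. b j) + (\<Sum>j\<in>{i..<L}. b j)"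
    using sum.atLeastLessThan_concat[of 0 i L b] assms by (simp add: atLeast0LessThan)
  ultimately show ?thesis unfolding vdc_def b_def by simp
qed

lemma vdc_nonneg: "vdc i \<ge> 0"
  by (auto simp: vdc_def intro!: sum_nonneg)

lemma vdc_less_1: "vdc i < 1"
proof -
  have "vdc i \<le> (\<Sum>j<i. (1/2) ^ (j + 1))"
    unfolding vdc_def by (rule sum_mono) (auto simp: power_one_over divide_le_cancel)
  also have "\<dots> = 1 - (1/2) ^ i" by (induction i) auto
  also have "\<dots> < 1" by simp
  finally show ?thesis .
qed

lemma vdc_double: "vdc (2 * k) = vdc k / 2"
proof -
  have "vdc (2 * k) = (\<Sum>j<Suc (2 * k). real ((2 * k div 2 ^ j) mod 2) / 2 ^ (j + 1))"
    by (rule vdc_eq_sum_bits) simp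
  also have "\<dots> = (\<Sum>j<2 * k. real ((2 * k div 2 ^ Suc j) mod 2) / 2 ^ (Suc j + 1))"
    by (subst sum.lessThan_Suc_shift) simp
  also have "\<dots> = (\<Sum>j<2 * k. real ((k div 2 ^ j) mod 2) / 2 ^ (j + 1)) / 2"
    by (simp add: sum_divide_distrib div_mult2_eq)
  also have "\<dots> = vdc k / 2" by (subst vdc_eq_sum_bits[of k "2 * k"]) auto
  finally show ?thesis .
qed

lemma vdc_double_Suc: "vdc (Suc (2 * k)) = 1/2 + vdc k / 2"
proof -
  have "vdc (Suc (2 * k)) = (\<Sum>j<Suc (Suc (2 * k)). real ((Suc (2 * k) div 2 ^ j) mod 2) / 2 ^ (j + 1))"
    by (rule vdc_eq_sum_bits) simp
  also have "\<dots> = 1/2 + (\<Sum>j<Suc (2 * k). real ((Suc (2 * k) div 2 ^ Suc j) mod 2) / 2 ^ (Suc j + 1))"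
    by (subst sum.lessThan_Suc_shift) simp
  also have "(\<Sum>j<Suc (2 * k). real ((Suc (2 * k) div 2 ^ Suc j) mod 2) / 2 ^ (Suc j + 1))
      = (\<Sum>j<Suc (2 * k). real ((k div 2 ^ j) mod 2) / 2 ^ (j + 1)) / 2"
    unfolding sum_divide_distrib by (rule sum.cong) (simp_all add: div_mult2_eq)
  also have "\<dots> = vdc k / 2" by (subst vdc_eq_sum_bits[of k "Suc (2 * k)"]) auto
  finally show ?thesis .
qed

definition vdc_count :: "nat \<Rightarrow> nat \<Rightarrow> real \<Rightarrow> nat" where
  "vdc_count z n x = card {j \<in> {z..<z + n}. vdc j < x}"

definition vdc_disc :: "nat \<Rightarrow> nat \<Rightarrow> real \<Rightarrow> real" where
  "vdc_disc z n x = real (vdc_count z n x) - real n * x"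

text \<open>The even indices \<open>2 k\<close> in \<open>[z, z + n)\<close> are those with \<open>k\<close> in
  \<open>[evens_start z, evens_start z + evens_len z n)\<close>, and similarly for the odd ones.\<close>

definition evens_start :: "nat \<Rightarrow> nat" where "evens_start z = (z + 1) div 2"
definition evens_len :: "nat \<Rightarrow> nat \<Rightarrow> nat" where "evens_len z n = (z + n + 1) div 2 - (z + 1) div 2"
definition odds_start :: "nat \<Rightarrow> nat" where "odds_start z = z div 2"
definition odds_len :: "nat \<Rightarrow> nat \<Rightarrow> nat" where "odds_len z n = (z + n) div 2 - z div 2"

definition half_imbalance :: "nat \<Rightarrow> nat \<Rightarrow> real" where
  "half_imbalance z n = real (evens_len z n) - real (odds_len z n)"

lemma evens_odds_len_cases:
  obtains a b where "z = 2 * a" "n = 2 * b" "evens_len z n = b" "odds_len z n = b"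
  | a b where "z = 2 * a" "n = 2 * b + 1" "evens_len z n = b + 1" "odds_len z n = b"
  | a b where "z = 2 * a + 1" "n = 2 * b" "evens_len z n = b" "odds_len z n = b"
  | a b where "z = 2 * a + 1" "n = 2 * b + 1" "evens_len z n = b" "odds_len z n = b + 1"
proof -
  obtain a where "z = 2 * a \<or> z = 2 * a + 1" by (metis oddE evenE)
  moreover obtain b where "n = 2 * b \<or> n = 2 * b + 1" by (metis oddE evenE)
  ultimately show thesis using that
    by (elim disjE) (simp_all add: evens_len_def odds_len_def)
qed

lemma evens_len_add_odds_len: "evens_len z n + odds_len z n = n"
  by (cases z n rule: evens_odds_len_cases) auto

lemma evens_odds_len_le: "evens_len z n \<le> (n + 1) div 2" "odds_len z n \<le> (n + 1) div 2"
  by (cases z n rule: evens_odds_len_cases; simp)+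

lemma evens_odds_len_even: "even n \<Longrightarrow> evens_len z n = n div 2 \<and> odds_len z n = n div 2"
  by (cases z n rule: evens_odds_len_cases) auto

lemma half_imbalance_even: "even n \<Longrightarrow> half_imbalance z n = 0"
  by (simp add: half_imbalance_def evens_odds_len_even)

lemma abs_half_imbalance_odd: "odd n \<Longrightarrow> \<bar>half_imbalance z n\<bar> = 1"
  unfolding half_imbalance_def by (cases z n rule: evens_odds_len_cases) auto

lemma vdc_count_split:
  "vdc_count z n x = card {k \<in> {evens_start z..<evens_start z + evens_len z n}. vdc (2 * k) < x}
     + card {k \<in> {odds_start z..<odds_start z + odds_len z n}. vdc (2 * k + 1) < x}"
proof -
  let ?A = "{k \<in> {evens_start z..<evens_start z + evens_len z n}. vdc (2 * k) < x}"
  let ?B = "{k \<in> {odds_start z..<odds_start z + odds_len z n}. vdc (2 * k + 1) < x}"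
  have evens: "k \<in> {evens_start z..<evens_start z + evens_len z n} \<longleftrightarrow> 2 * k \<in> {z..<z + n}" for k
    by (cases z n rule: evens_odds_len_cases) (auto simp: evens_start_def)
  have odds: "k \<in> {odds_start z..<odds_start z + odds_len z n} \<longleftrightarrow> 2 * k + 1 \<in> {z..<z + n}" for k
    by (cases z n rule: evens_odds_len_cases) (auto simp: odds_start_def)
  have "{j \<in> {z..<z + n}. vdc j < x} = (\<lambda>k. 2 * k) ` ?A \<union> (\<lambda>k. 2 * k + 1) ` ?B"
  proof (rule set_eqI, rule iffI)
    fix j assume j: "j \<in> {j \<in> {z..<z + n}. vdc j < x}"
    show "j \<in> (\<lambda>k. 2 * k) ` ?A \<union> (\<lambda>k. 2 * k + 1) ` ?B"
    proof (cases "even j")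
      case True
      then obtain k where "j = 2 * k" by auto
      then show ?thesis using j evens[of k] by auto
    next
      case False
      then obtain k where "j = 2 * k + 1" using oddE by blast
      then show ?thesis using j odds[of k] by auto
    qed
  qed (use evens odds in auto)
  moreover have "(\<lambda>k. 2 * k) ` ?A \<inter> (\<lambda>k. 2 * k + 1) ` ?B = {}" by auto presburger
  moreover have "card ((\<lambda>k. 2 * k) ` ?A) = card ?A" "card ((\<lambda>k. 2 * k + 1) ` ?B) = card ?B"
    by (auto intro!: card_image simp: inj_on_def)
  ultimately show ?thesis unfolding vdc_count_def by (simp add: card_Un_disjoint)
qed

lemma vdc_disc_low:
  assumes "0 \<le> x" "x \<le> 1/2"
  shows "vdc_disc z n x = vdc_disc (evens_start z) (evens_len z n) (2 * x) + half_imbalance z n * x"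
proof -
  have "{k \<in> {evens_start z..<evens_start z + evens_len z n}. vdc (2 * k) < x}
      = {k \<in> {evens_start z..<evens_start z + evens_len z n}. vdc k < 2 * x}"
    by (auto simp: vdc_double)
  moreover have "{k \<in> {odds_start z..<odds_start z + odds_len z n}. vdc (2 * k + 1) < x} = {}"
  proof -
    have "x \<le> vdc (2 * k + 1)" for k using assms vdc_nonneg[of k] by (simp add: vdc_double_Suc)
    then show ?thesis by (auto simp: not_less[symmetric])
  qed
  ultimately have "vdc_count z n x = vdc_count (evens_start z) (evens_len z n) (2 * x)"
    unfolding vdc_count_split[of z n x] by (simp add: vdc_count_def)
  moreover have "real n = real (evens_len z n) + real (odds_len z n)"
    by (metis evens_len_add_odds_len of_nat_add)
  ultimately show ?thesis unfolding vdc_disc_def half_imbalance_def by (simp add: algebra_simps)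
qed

lemma vdc_disc_high:
  assumes "1/2 \<le> x" "x \<le> 1"
  shows "vdc_disc z n x = vdc_disc (odds_start z) (odds_len z n) (2 * x - 1) + half_imbalance z n * (1 - x)"
proof -
  have "{k \<in> {evens_start z..<evens_start z + evens_len z n}. vdc (2 * k) < x}
      = {evens_start z..<evens_start z + evens_len z n}"
  proof -
    have "vdc (2 * k) < x" for k using assms vdc_less_1[of k] by (simp add: vdc_double)
    then show ?thesis by auto
  qed
  moreover have "{k \<in> {odds_start z..<odds_start z + odds_len z n}. vdc (2 * k + 1) < x}
      = {k \<in> {odds_start z..<odds_start z + odds_len z n}. vdc k < 2 * x - 1}"
    by (auto simp: vdc_double_Suc)
  ultimately have "vdc_count z n x = evens_len z n + vdc_count (odds_start z) (odds_len z n) (2 * x - 1)"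
    unfolding vdc_count_split[of z n x] by (simp add: vdc_count_def)
  moreover have "real n = real (evens_len z n) + real (odds_len z n)"
    by (metis evens_len_add_odds_len of_nat_add)
  ultimately show ?thesis unfolding vdc_disc_def half_imbalance_def by (simp add: algebra_simps)
qed

lemma vdc_disc_0 [simp]: "vdc_disc z 0 x = 0"
  by (simp add: vdc_disc_def vdc_count_def)

lemma vdc_disc_1: "vdc_disc z 1 x = (if vdc z < x then 1 else 0) - x"
proof -
  have "{j \<in> {z..<z + 1}. vdc j < x} = (if vdc z < x then {z} else {})" by auto
  then show ?thesis by (simp add: vdc_disc_def vdc_count_def)
qed

lemma abs_mult_le_half: "\<bar>t\<bar> \<le> 1/2 \<Longrightarrow> \<bar>(c::real) * t\<bar> \<le> \<bar>c\<bar> / 2"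
  using mult_left_mono[of "\<bar>t\<bar>" "1/2" "\<bar>c\<bar>"] by (simp add: abs_mult)

text \<open>Both halves of the recursion are captured by a single shape: a discrepancy of one of the
  two half-sequences plus the imbalance weighted by \<open>min x (1 - x) \<in> [0, 1/2]\<close>.\<close>

lemma vdc_disc_split:
  assumes "0 \<le> x" "x \<le> 1"
  obtains z' l x' where "(z', l) \<in> {(evens_start z, evens_len z n), (odds_start z, odds_len z n)}"
    and "0 \<le> x'" "x' \<le> 1"
    and "vdc_disc z n x = vdc_disc z' l x' + half_imbalance z n * min x (1 - x)"
proof (cases "x \<le> 1/2")
  case True
  then show ?thesis
    using that[of "evens_start z" "evens_len z n" "2 * x"] vdc_disc_low[of x z n] assms
    by (simp add: min_def)
next
  case False
  then show ?thesis
    using that[of "odds_start z" "odds_len z n" "2 * x - 1"] vdc_disc_high[of x z n] assms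
    by (simp add: min_def)
qed

lemma abs_vdc_disc_le:
  assumes "n \<le> 2 ^ k + 1" "0 \<le> x" "x \<le> 1"
  shows "\<bar>vdc_disc z n x\<bar> \<le> 1 + real k / 2"
  using assms
proof (induction n arbitrary: z x k rule: less_induct)
  case (less n)
  show ?case
  proof (cases "n \<le> 1")
    case True
    then consider "n = 0" | "n = 1" by linarith
    then show ?thesis using less.prems vdc_disc_1[of z x] by cases auto
  next
    case False
    obtain z' l x' where half: "(z', l) \<in> {(evens_start z, evens_len z n), (odds_start z, odds_len z n)}"
      and x': "0 \<le> x'" "x' \<le> 1"
      and split: "vdc_disc z n x = vdc_disc z' l x' + half_imbalance z n * min x (1 - x)"
      using vdc_disc_split[OF less.prems(2,3)] by blast
    have l: "l \<le> (n + 1) div 2" using half evens_odds_len_le by auto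
    then have "l < n" using False by linarith
    have weight: "\<bar>half_imbalance z n * min x (1 - x)\<bar> \<le> \<bar>half_imbalance z n\<bar> / 2"
      by (rule abs_mult_le_half) (use less.prems in \<open>auto simp: min_def\<close>)
    show ?thesis
    proof (cases "even n")
      case True
      have "\<bar>vdc_disc z' l x'\<bar> \<le> 1 + real k / 2"
        using less.IH[OF \<open>l < n\<close> _ x'] l less.prems(1) True by (simp add: le_div_geq)
      then show ?thesis using split weight half_imbalance_even[OF True] by simp
    next
      case False
      then obtain k' where k: "k = Suc k'"
        using less.prems(1) \<open>\<not> n \<le> 1\<close> by (cases k) (auto simp: le_Suc_eq)
      have "\<bar>vdc_disc z' l x'\<bar> \<le> 1 + real k' / 2"
        using less.IH[OF \<open>l < n\<close> _ x'] l less.prems(1) k by simp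
      moreover have "real k / 2 = real k' / 2 + 1/2" using k by simp
      ultimately show ?thesis
        unfolding split using weight abs_half_imbalance_odd[OF False, of z]
          abs_triangle_ineq[of "vdc_disc z' l x'" "half_imbalance z n * min x (1 - x)"] by linarith
    qed
  qed
qed

lemma abs_vdc_disc_even_le:
  assumes "even n" "n \<le> 2 * (2 ^ k + 1)" "0 \<le> x" "x \<le> 1"
  shows "\<bar>vdc_disc z n x\<bar> \<le> 1 + real k / 2"
proof -
  obtain z' l x' where half: "(z', l) \<in> {(evens_start z, evens_len z n), (odds_start z, odds_len z n)}"
    and x': "0 \<le> x'" "x' \<le> 1"
    and split: "vdc_disc z n x = vdc_disc z' l x' + half_imbalance z n * min x (1 - x)"
    using vdc_disc_split[OF assms(3,4)] by blast
  have "l = n div 2" using half evens_odds_len_even[OF assms(1)] by auto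
  then have "\<bar>vdc_disc z' l x'\<bar> \<le> 1 + real k / 2"
    using assms(2) by (intro abs_vdc_disc_le x') simp
  then show ?thesis using split half_imbalance_even[OF assms(1)] by simp
qed

lemma add_le_log_if_pow_le:
  assumes "(2::real) ^ (2 * k + 4) \<le> L ^ 3" "L > 0"
  shows "2 + real k \<le> 3/2 * log 2 L"
proof -
  have "log 2 ((2::real) ^ (2 * k + 4)) \<le> log 2 (L ^ 3)"
    using assms by (subst log_le_cancel_iff) auto
  then show ?thesis using assms(2) by (simp add: log_nat_power)
qed

lemma pow_le_cube_if_le:
  assumes "2 ^ k + 4 \<le> (L::real)"
  shows "(2::real) ^ (2 * k + 4) \<le> L ^ 3"
proof -
  define a :: real where "a = 2 ^ k"
  have "a \<ge> 0" by (simp add: a_def)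
  have "(2::real) ^ (2 * k + 4) = 16 * a\<^sup>2"
    by (simp add: a_def power_add power_mult[symmetric] mult.commute)
  also have "\<dots> \<le> (a + 4) ^ 3"
  proof -
    have "(a + 4) ^ 3 - 16 * a\<^sup>2 = a * ((a - 2)\<^sup>2 + 44) + 64"
      by (simp add: power2_eq_square power3_eq_cube algebra_simps)
    moreover have "a * ((a - 2)\<^sup>2 + 44) \<ge> 0" using \<open>a \<ge> 0\<close> by simp
    ultimately show ?thesis by linarith
  qed
  also have "\<dots> \<le> L ^ 3" by (rule power_mono) (use assms \<open>a \<ge> 0\<close> in \<open>auto simp: a_def\<close>)
  finally show ?thesis .
qed

lemma exists_pow2_bracket:
  assumes "m \<ge> (2::nat)"
  obtains k where "2 ^ k < m" "m \<le> 2 ^ Suc k"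
proof -
  define k where "k = (LEAST k. m \<le> 2 ^ k)"
  have "m \<le> 2 ^ k" unfolding k_def by (rule LeastI[of _ m]) (simp add: less_imp_le)
  moreover have "k \<noteq> 0" using calculation assms by (intro notI) simp
  then obtain k' where "k = Suc k'" by (cases k) auto
  moreover have "\<not> m \<le> 2 ^ k'" using not_less_Least[of k' "\<lambda>k. m \<le> 2 ^ k"] calculation(2)
    unfolding k_def by simp
  ultimately show thesis using that[of k'] by simp
qed

text \<open>The dyadic level \<open>k\<close> of the halves of \<open>n\<close> elements, chosen so that \<open>2 + k\<close> still fits
  below \<open>3/2 lg (n + 1)\<close>; for \<open>n = 3\<close> the level \<open>1\<close> is taken so that an odd \<open>n\<close> always
  has \<open>k \<ge> 1\<close>.\<close>

lemma exists_half_level: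
  assumes "2 \<le> n"
  obtains k where "(n + 1) div 2 \<le> 2 ^ k + 1" "odd n \<Longrightarrow> 1 \<le> k"
    and "2 + real k \<le> 3/2 * log 2 (real n + 1)"
proof (cases "n \<le> 4")
  case True
  define k :: nat where "k = (if n = 3 then 1 else 0)"
  have "n = 2 \<or> n = 3 \<or> n = 4" using assms True by auto
  then have "(n + 1) div 2 \<le> 2 ^ k + 1" "odd n \<Longrightarrow> 1 \<le> k" "(2::real) ^ (2 * k + 4) \<le> (real n + 1) ^ 3"
    unfolding k_def by auto
  then show thesis using that add_le_log_if_pow_le by simp
next
  case False
  have "2 \<le> (n + 1) div 2 - 1" using False by simp
  then obtain k where k: "2 ^ k < (n + 1) div 2 - 1" "(n + 1) div 2 - 1 \<le> 2 ^ Suc k"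
    by (rule exists_pow2_bracket)
  moreover have "2 * ((n + 1) div 2) \<le> n + 1" by simp
  ultimately have "2 ^ Suc k + 4 \<le> n + 1" unfolding power_Suc by linarith
  then have "real (2 ^ Suc k + 4) \<le> real (n + 1)" by (simp only: of_nat_le_iff)
  then have "2 + real (Suc k) \<le> 3/2 * log 2 (real n + 1)"
    by (intro add_le_log_if_pow_le pow_le_cube_if_le) simp_all
  then show thesis using that[of "Suc k"] k by simp
qed

lemma log_half_step:
  assumes "m \<ge> 1"
  shows "3/2 * log 2 (real m + 2) + 1/2 \<le> 3/2 * log 2 (2 * real m + 2)"
proof -
  have m: "real m \<ge> 1" using assms by simp
  have "(2 * real m + 2) ^ 3 - 2 * (real m + 2) ^ 3 = 6 * real m ^ 3 + 12 * real m ^ 2 - 8"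
    by (simp add: power2_eq_square power3_eq_cube algebra_simps)
  moreover have "real m ^ 3 \<ge> 1" "real m ^ 2 \<ge> 1" using m by (simp_all add: one_le_power)
  ultimately have "2 * (real m + 2) ^ 3 \<le> (2 * real m + 2) ^ 3" by linarith
  then have "log 2 (2 * (real m + 2) ^ 3) \<le> log 2 ((2 * real m + 2) ^ 3)"
    using m by (subst log_le_cancel_iff) auto
  then show ?thesis using m by (simp add: log_mult log_nat_power)
qed

lemma vdc_disc_half_step_le:
  assumes "2 \<le> n" "l \<in> {evens_len z n, odds_len z n}"
  shows "3/2 * log 2 (real l + 1) + \<bar>half_imbalance z n\<bar> / 2 \<le> 3/2 * log 2 (real n + 1)"
proof (cases "even n")
  case True
  then have "l \<le> n" using assms(2) evens_odds_len_even[of n z] by auto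
  then show ?thesis using half_imbalance_even[OF True] by simp
next
  case False
  then obtain m where n: "n = 2 * m + 1" and "m \<ge> 1" using assms(1) oddE by fastforce
  have "l \<le> m + 1" using assms(2) evens_odds_len_le[of z n] n by auto
  then have "3/2 * log 2 (real l + 1) \<le> 3/2 * log 2 (real m + 2)" by simp
  moreover have "real n + 1 = 2 * real m + 2" using n by simp
  then have "log 2 (real n + 1) = log 2 (2 * real m + 2)" by (simp only:)
  ultimately show ?thesis
    using log_half_step[OF \<open>m \<ge> 1\<close>] abs_half_imbalance_odd[OF False, of z] by linarith
qed

lemma vdc_disc_halves_le:
  assumes "2 \<le> n" "0 \<le> a" "a \<le> 1" "0 \<le> b" "b \<le> 1"
  shows "\<bar>vdc_disc (evens_start z) (evens_len z n) a\<bar> + \<bar>vdc_disc (odds_start z) (odds_len z n) b\<bar>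
           + \<bar>half_imbalance z n\<bar> / 2 \<le> 3/2 * log 2 (real n + 1)"
proof -
  obtain k where k: "(n + 1) div 2 \<le> 2 ^ k + 1" "odd n \<Longrightarrow> 1 \<le> k"
    and log: "2 + real k \<le> 3/2 * log 2 (real n + 1)"
    using exists_half_level[OF assms(1)] by blast
  have len: "evens_len z n \<le> 2 ^ k + 1" "odds_len z n \<le> 2 ^ k + 1"
    using evens_odds_len_le[of z n] k(1) by linarith+
  have evens: "\<bar>vdc_disc (evens_start z) (evens_len z n) a\<bar> \<le> 1 + real k / 2"
    by (rule abs_vdc_disc_le[OF len(1) assms(2,3)])
  have odds: "\<bar>vdc_disc (odds_start z) (odds_len z n) b\<bar> \<le> 1 + real k / 2"
    by (rule abs_vdc_disc_le[OF len(2) assms(4,5)])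
  show ?thesis
  proof (cases "even n")
    case True
    then show ?thesis using evens odds log half_imbalance_even[OF True] by simp
  next
    case False
    then obtain k' where k': "k = Suc k'" using k(2) by (cases k) auto
    have "even (evens_len z n) \<or> even (odds_len z n)"
      using evens_len_add_odds_len[of z n] False by (metis odd_add)
    then have "\<bar>vdc_disc (evens_start z) (evens_len z n) a\<bar> + \<bar>vdc_disc (odds_start z) (odds_len z n) b\<bar>
        \<le> 2 + real k - 1/2"
    proof
      assume "even (evens_len z n)"
      then have "\<bar>vdc_disc (evens_start z) (evens_len z n) a\<bar> \<le> 1 + real k' / 2"
        using len(1) k' assms(2,3) by (intro abs_vdc_disc_even_le) auto
      then show ?thesis using odds k' by (simp add: add_divide_distrib)
    next
      assume "even (odds_len z n)"
      then have "\<bar>vdc_disc (odds_start z) (odds_len z n) b\<bar> \<le> 1 + real k' / 2"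
        using len(2) k' assms(4,5) by (intro abs_vdc_disc_even_le) auto
      then show ?thesis using evens k' by (simp add: add_divide_distrib)
    qed
    then show ?thesis using log abs_half_imbalance_odd[OF False, of z] by simp
  qed
qed

lemma vdc_disc_diff_le:
  assumes "0 \<le> x" "x \<le> 1" "0 \<le> y" "y \<le> 1"
  shows "vdc_disc z n x - vdc_disc z n y \<le> 3/2 * log 2 (real n + 1)"
  using assms
proof (induction n arbitrary: z x y rule: less_induct)
  case (less n)
  show ?case
  proof (cases "n \<le> 1")
    case True
    then consider "n = 0" | "n = 1" by linarith
    then show ?thesis using less.prems vdc_disc_1[of z x] vdc_disc_1[of z y] by cases auto
  next
    case False
    let ?e = "half_imbalance z n"
    obtain zx lx x' where x_half: "(zx, lx) \<in> {(evens_start z, evens_len z n), (odds_start z, odds_len z n)}"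
      and x': "0 \<le> x'" "x' \<le> 1" and x_split: "vdc_disc z n x = vdc_disc zx lx x' + ?e * min x (1 - x)"
      using vdc_disc_split[OF less.prems(1,2)] by blast
    obtain zy ly y' where y_half: "(zy, ly) \<in> {(evens_start z, evens_len z n), (odds_start z, odds_len z n)}"
      and y': "0 \<le> y'" "y' \<le> 1" and y_split: "vdc_disc z n y = vdc_disc zy ly y' + ?e * min y (1 - y)"
      using vdc_disc_split[OF less.prems(3,4)] by blast
    have "\<bar>?e * (min x (1 - x) - min y (1 - y))\<bar> \<le> \<bar>?e\<bar> / 2"
      by (rule abs_mult_le_half) (use less.prems in \<open>auto simp: min_def abs_if\<close>)
    then have weight: "?e * min x (1 - x) - ?e * min y (1 - y) \<le> \<bar>?e\<bar> / 2"
      unfolding right_diff_distrib by linarith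
    have "vdc_disc zx lx x' - vdc_disc zy ly y' + \<bar>?e\<bar> / 2 \<le> 3/2 * log 2 (real n + 1)"
    proof (cases "(zx, lx) = (zy, ly)")
      case True
      have "lx < n" using x_half evens_odds_len_le[of z n] False by auto
      then have "vdc_disc zx lx x' - vdc_disc zx lx y' \<le> 3/2 * log 2 (real lx + 1)"
        using less.IH x' y' by blast
      then show ?thesis
        using True vdc_disc_half_step_le[of n lx z] x_half False by auto
    next
      case False
      have "2 \<le> n" using \<open>\<not> n \<le> 1\<close> by simp
      from False x_half y_half consider
          "(zx, lx) = (evens_start z, evens_len z n)" "(zy, ly) = (odds_start z, odds_len z n)"
        | "(zx, lx) = (odds_start z, odds_len z n)" "(zy, ly) = (evens_start z, evens_len z n)"
        by blast
      then show ?thesis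
      proof cases
        case 1
        then show ?thesis using vdc_disc_halves_le[OF \<open>2 \<le> n\<close> x' y', of z] by auto
      next
        case 2
        then show ?thesis using vdc_disc_halves_le[OF \<open>2 \<le> n\<close> y' x', of z] by auto
      qed
    qed
    then show ?thesis unfolding x_split y_split using weight by linarith
  qed
qed

section \<open>The quasi-random router\<close>

definition cum_prob :: "('v::finite \<Rightarrow> 'v \<Rightarrow> real) \<Rightarrow> ('v \<Rightarrow> 'v list) \<Rightarrow> 'v \<Rightarrow> nat \<Rightarrow> real" where
  "cum_prob P ord v k = (\<Sum>x\<leftarrow>take k (ord v). P v x)"

locale router_row =
  fixes P :: "'v::finite \<Rightarrow> 'v \<Rightarrow> real" and ord :: "'v \<Rightarrow> 'v list" and v :: 'v
  assumes stochastic: "stochastic P"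
    and distinct_ord: "distinct (ord v)"
    and set_ord: "set (ord v) = nbhd P v"
begin

abbreviation "xs \<equiv> ord v"
abbreviation "c \<equiv> cum_prob P ord v"

lemma prob_eq_0_if_notin: "u \<notin> set xs \<Longrightarrow> P v u = 0"
  using set_ord stochastic unfolding nbhd_def stochastic_def by (simp add: order.order_iff_strict) blast

lemma prob_nth_pos: "k < length xs \<Longrightarrow> P v (xs ! k) > 0"
  using set_ord nth_mem[of k xs] by (auto simp: nbhd_def)

lemma cum_prob_0: "c 0 = 0"
  by (simp add: cum_prob_def)

lemma cum_prob_Suc: "k < length xs \<Longrightarrow> c (Suc k) = c k + P v (xs ! k)"
  by (simp add: cum_prob_def take_Suc_conv_app_nth)

lemma cum_prob_length: "c (length xs) = 1"
proof -
  have "c (length xs) = (\<Sum>u\<in>set xs. P v u)"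
    by (simp add: cum_prob_def sum_list_distinct_conv_sum_set[OF distinct_ord])
  also have "\<dots> = (\<Sum>u\<in>UNIV. P v u)"
    by (rule sum.mono_neutral_left) (auto simp: prob_eq_0_if_notin)
  also have "\<dots> = 1" using stochastic by (simp add: stochastic_def)
  finally show ?thesis .
qed

lemma length_pos: "length xs > 0"
  using cum_prob_length cum_prob_0 by (cases "length xs") auto

lemma cum_prob_mono: "k \<le> k' \<Longrightarrow> c k \<le> c k'"
proof (induction k' rule: dec_induct)
  case (step k')
  then show ?case
    using cum_prob_Suc[of k'] prob_nth_pos[of k'] by (cases "k' < length xs") (auto simp: cum_prob_def)
qed simp

lemma cum_prob_le_1: "c k \<le> 1"
  using cum_prob_mono[of k "length xs"] cum_prob_length by (cases "k \<le> length xs") (auto simp: cum_prob_def)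

lemma ex1_cum_prob_interval:
  assumes "0 \<le> x" "x < 1"
  shows "\<exists>!k. k < length xs \<and> c k \<le> x \<and> x < c (Suc k)"
proof (rule ex_ex1I)
  define k where "k = (LEAST k. x < c (Suc k))"
  have ex: "x < c (Suc (length xs - 1))" using assms cum_prob_length length_pos by simp
  have "x < c (Suc k)" unfolding k_def by (rule LeastI[of "\<lambda>k. x < c (Suc k)", OF ex])
  moreover have "k \<le> length xs - 1" unfolding k_def by (rule Least_le[of "\<lambda>k. x < c (Suc k)", OF ex])
  moreover have "c k \<le> x"
  proof (cases k)
    case 0 then show ?thesis using cum_prob_0 assms by simp
  next
    case (Suc k')
    then show ?thesis using not_less_Least[of k' "\<lambda>k. x < c (Suc k)"] unfolding k_def by simp
  qed
  ultimately have "k < length xs \<and> c k \<le> x \<and> x < c (Suc k)" using length_pos by linarith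
  then show "\<exists>k. k < length xs \<and> c k \<le> x \<and> x < c (Suc k)" ..
next
  fix k1 k2 assume k1: "k1 < length xs \<and> c k1 \<le> x \<and> x < c (Suc k1)"
    and k2: "k2 < length xs \<and> c k2 \<le> x \<and> x < c (Suc k2)"
  show "k1 = k2"
  proof (rule ccontr)
    assume "k1 \<noteq> k2"
    then consider "Suc k1 \<le> k2" | "Suc k2 \<le> k1" by linarith
    then show False
    proof cases
      case 1 then show False using cum_prob_mono[OF 1] k1 k2 by linarith
    next
      case 2 then show False using cum_prob_mono[OF 2] k1 k2 by linarith
    qed
  qed
qed

lemma router_eq_nth_iff:
  assumes "k < length xs"
  shows "router P ord v j = xs ! k \<longleftrightarrow> c k \<le> vdc j \<and> vdc j < c (Suc k)"
proof -
  obtain k0 where k0: "k0 < length xs" "c k0 \<le> vdc j" "vdc j < c (Suc k0)"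
    and uniq: "\<And>k. k < length xs \<and> c k \<le> vdc j \<and> vdc j < c (Suc k) \<Longrightarrow> k = k0"
    using ex1_cum_prob_interval[OF vdc_nonneg vdc_less_1, of j] by (elim ex1E) blast
  have "router P ord v j = xs ! k0"
    unfolding router_def
  proof (rule the_equality)
    show "\<exists>k<length xs. xs ! k0 = xs ! k \<and> (\<Sum>x\<leftarrow>take k xs. P v x) \<le> vdc j
        \<and> vdc j < (\<Sum>x\<leftarrow>take (Suc k) xs. P v x)"
      using k0 by (auto simp: cum_prob_def)
  qed (use uniq in \<open>auto simp: cum_prob_def\<close>)
  then show ?thesis
    using uniq[of k] k0 assms distinct_ord by (auto simp: nth_eq_iff_index_eq)
qed

lemma router_in_set: "router P ord v j \<in> set xs"
proof -
  obtain k where "k < length xs" "c k \<le> vdc j" "vdc j < c (Suc k)"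
    using ex1_cum_prob_interval[OF vdc_nonneg vdc_less_1, of j] by blast
  then have "router P ord v j = xs ! k" using router_eq_nth_iff by blast
  then show ?thesis using \<open>k < length xs\<close> by simp
qed

lemma Icount_eq_0: "u \<notin> set xs \<Longrightarrow> Icount P ord v u z z' = 0"
  using router_in_set unfolding Icount_def by auto

text \<open>The tokens \<open>z, \<dots>, z + n - 1\<close> sent to the \<open>k\<close>-th neighbour are those whose van der Corput
  point falls into \<open>[c k, c (k + 1))\<close>, so the routing error is a difference of discrepancies.\<close>

lemma Icount_error_eq_vdc_disc_diff:
  assumes "k < length xs"
  shows "real (Icount P ord v (xs ! k) z (z + n)) - real n * P v (xs ! k)
         = vdc_disc z n (c (Suc k)) - vdc_disc z n (c k)"
proof -
  have sub: "{j \<in> {z..<z + n}. vdc j < c k} \<subseteq> {j \<in> {z..<z + n}. vdc j < c (Suc k)}"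
    using cum_prob_mono[of k "Suc k"] by auto
  have "{j \<in> {z..<z + n}. router P ord v j = xs ! k}
      = {j \<in> {z..<z + n}. vdc j < c (Suc k)} - {j \<in> {z..<z + n}. vdc j < c k}"
  proof (rule set_eqI)
    fix j
    show "j \<in> {j \<in> {z..<z + n}. router P ord v j = xs ! k} \<longleftrightarrow>
        j \<in> {j \<in> {z..<z + n}. vdc j < c (Suc k)} - {j \<in> {z..<z + n}. vdc j < c k}"
      using router_eq_nth_iff[OF assms, of j] by auto
  qed
  then have "Icount P ord v (xs ! k) z (z + n) = vdc_count z n (c (Suc k)) - vdc_count z n (c k)"
    unfolding Icount_def vdc_count_def by (simp only:) (rule card_Diff_subset[OF _ sub], simp)
  moreover have "vdc_count z n (c k) \<le> vdc_count z n (c (Suc k))"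
    unfolding vdc_count_def by (rule card_mono[OF _ sub]) simp
  ultimately have "real (Icount P ord v (xs ! k) z (z + n))
      = real (vdc_count z n (c (Suc k))) - real (vdc_count z n (c k))" by simp
  then show ?thesis using cum_prob_Suc[OF assms] unfolding vdc_disc_def by (simp add: algebra_simps)
qed

lemma abs_Icount_error_le:
  "\<bar>real (Icount P ord v u z (z + n)) - real n * P v u\<bar> \<le> 3/2 * log 2 (real n + 1)"
proof (cases "u \<in> set xs")
  case True
  then obtain k where k: "k < length xs" "u = xs ! k" by (auto simp: in_set_conv_nth)
  have c: "0 \<le> c k" "c k \<le> 1" "0 \<le> c (Suc k)" "c (Suc k) \<le> 1"
    using cum_prob_mono[of 0] cum_prob_0 cum_prob_le_1 by auto
  show ?thesis
    unfolding k(2) Icount_error_eq_vdc_disc_diff[OF k(1)] abs_le_iff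
    using vdc_disc_diff_le[OF c(1,2,3,4)] vdc_disc_diff_le[OF c(3,4,1,2)] by auto
next
  case False
  then show ?thesis using Icount_eq_0 prob_eq_0_if_notin by simp
qed

end

section \<open>Propagation of the routing errors\<close>

definition qr_cum :: "('v::finite \<Rightarrow> 'v \<Rightarrow> real) \<Rightarrow> ('v \<Rightarrow> 'v list) \<Rightarrow> ('v \<Rightarrow> nat) \<Rightarrow> nat \<Rightarrow> 'v \<Rightarrow> nat" where
  "qr_cum P ord chi0 t = snd (qr_state P ord chi0 t)"

definition route_err :: "('v::finite \<Rightarrow> 'v \<Rightarrow> real) \<Rightarrow> ('v \<Rightarrow> 'v list) \<Rightarrow> ('v \<Rightarrow> nat) \<Rightarrow> nat \<Rightarrow> 'v \<Rightarrow> 'v \<Rightarrow> real" where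
  "route_err P ord chi0 t v u =
     real (Icount P ord v u (qr_cum P ord chi0 t v) (qr_cum P ord chi0 t v + qr_chi P ord chi0 t v))
     - real (qr_chi P ord chi0 t v) * P v u"

lemma sum_card_fibres:
  fixes f :: "nat \<Rightarrow> 'v::finite"
  assumes "finite A"
  shows "(\<Sum>u\<in>UNIV. card {j \<in> A. f j = u}) = card A"
proof -
  have "(\<Sum>u\<in>UNIV. card {j \<in> A. f j = u}) = (\<Sum>u\<in>UNIV. \<Sum>j\<in>A. if f j = u then 1 else 0)"
    using assms by (simp add: sum.inter_filter[symmetric])
  also have "\<dots> = (\<Sum>j\<in>A. \<Sum>u\<in>UNIV. if f j = u then 1 else 0)" by (rule sum.swap)
  finally show ?thesis by simp
qed

lemma sum_Icount: "(\<Sum>u\<in>UNIV. Icount P ord v u z (z + n)) = n"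
  unfolding Icount_def by (subst sum_card_fibres) auto

lemma qr_chi_0: "qr_chi P ord chi0 0 = chi0"
  by (simp add: qr_chi_def)

lemma qr_chi_Suc:
  "qr_chi P ord chi0 (Suc t) u = (\<Sum>v\<in>UNIV.
     Icount P ord v u (qr_cum P ord chi0 t v) (qr_cum P ord chi0 t v + qr_chi P ord chi0 t v))"
  by (simp add: qr_chi_def qr_cum_def Let_def case_prod_beta)

lemma sum_qr_chi: "(\<Sum>v\<in>UNIV. qr_chi P ord chi0 t v) = (\<Sum>v\<in>UNIV. chi0 v)"
proof (induction t)
  case (Suc t)
  have "(\<Sum>u\<in>UNIV. qr_chi P ord chi0 (Suc t) u) = (\<Sum>v\<in>UNIV. \<Sum>u\<in>UNIV.
      Icount P ord v u (qr_cum P ord chi0 t v) (qr_cum P ord chi0 t v + qr_chi P ord chi0 t v))"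
    unfolding qr_chi_Suc by (rule sum.swap)
  also have "\<dots> = (\<Sum>v\<in>UNIV. qr_chi P ord chi0 t v)" by (simp add: sum_Icount)
  finally show ?case using Suc by simp
qed (simp add: qr_chi_0)

lemma qr_chi_le_sum: "qr_chi P ord chi0 t v \<le> (\<Sum>v\<in>UNIV. chi0 v)"
  using member_le_sum[of v UNIV "qr_chi P ord chi0 t"] sum_qr_chi[of P ord chi0 t] by simp

lemma qr_chi_Suc_eq:
  "real (qr_chi P ord chi0 (Suc t) u)
     = (\<Sum>v\<in>UNIV. real (qr_chi P ord chi0 t v) * P v u) + (\<Sum>v\<in>UNIV. route_err P ord chi0 t v u)"
  unfolding qr_chi_Suc route_err_def by (simp add: sum_subtractf)

lemma sum_route_err_eq_0:
  assumes "stochastic P"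
  shows "(\<Sum>u\<in>UNIV. route_err P ord chi0 t v u) = 0"
  using assms unfolding route_err_def
  by (simp add: sum_subtractf sum_distrib_left[symmetric] sum_Icount stochastic_def flip: of_nat_sum)

lemma qr_mu_0: "qr_mu P chi0 0 w = real (chi0 w)"
  unfolding qr_mu_def by (simp add: if_distrib[of "\<lambda>x. real (chi0 _) * x"] cong: if_cong)

lemma qr_mu_Suc: "qr_mu P chi0 (Suc T) w = (\<Sum>v\<in>UNIV. qr_mu P chi0 T v * P v w)"
  unfolding qr_mu_def
  by (simp add: sum_distrib_left sum_distrib_right mult.assoc) (rule sum.swap)

lemma qr_chi_eq_mu_plus_errors:
  "real (qr_chi P ord chi0 T w) = qr_mu P chi0 T w
     + (\<Sum>t<T. \<Sum>u\<in>UNIV. (\<Sum>v\<in>UNIV. route_err P ord chi0 t v u) * mpow P (T - Suc t) u w)"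
proof (induction T arbitrary: w)
  case 0
  then show ?case by (simp add: qr_chi_0 qr_mu_0)
next
  case (Suc T)
  define E where "E t u = (\<Sum>v\<in>UNIV. route_err P ord chi0 t v u)" for t u
  have push: "(\<Sum>v\<in>UNIV. (\<Sum>u\<in>UNIV. E t u * mpow P (T - Suc t) u v) * P v w)
      = (\<Sum>u\<in>UNIV. E t u * mpow P (Suc T - Suc t) u w)" if "t < T" for t
    by (simp add: sum_distrib_left sum_distrib_right mult.assoc Suc_diff_Suc[OF that, symmetric])
      (rule sum.swap)
  have last: "E T w = (\<Sum>u\<in>UNIV. E T u * mpow P (Suc T - Suc T) u w)"
    by (simp add: if_distrib[of "\<lambda>x. E T _ * x"] cong: if_cong)
  have "real (qr_chi P ord chi0 (Suc T) w)
      = (\<Sum>v\<in>UNIV. (qr_mu P chi0 T v + (\<Sum>t<T. \<Sum>u\<in>UNIV. E t u * mpow P (T - Suc t) u v)) * P v w)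
        + E T w"
    unfolding qr_chi_Suc_eq Suc.IH E_def ..
  also have "\<dots> = qr_mu P chi0 (Suc T) w + (\<Sum>t<T. \<Sum>u\<in>UNIV. E t u * mpow P (Suc T - Suc t) u w)
      + E T w"
    by (simp add: distrib_right sum.distrib qr_mu_Suc sum_distrib_right[of _ "{..<T}"] push
        flip: sum.swap[of _ UNIV "{..<T}"])
  also have "\<dots> = qr_mu P chi0 (Suc T) w + (\<Sum>t<Suc T. \<Sum>u\<in>UNIV. E t u * mpow P (Suc T - Suc t) u w)"
    using last by simp
  finally show ?case unfolding E_def .
qed

lemma sum_abs_le_by_in_degree:
  fixes e :: "'v::finite \<Rightarrow> 'v \<Rightarrow> real"
  assumes bound: "\<And>v u. \<bar>e v u\<bar> \<le> D"
    and support: "\<And>v u. e v u \<noteq> 0 \<Longrightarrow> v \<in> S u"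
    and in_degree: "\<And>u. card (S u) \<le> d"
  shows "(\<Sum>v\<in>UNIV. \<Sum>u\<in>UNIV. \<bar>e v u\<bar> * \<bar>g u\<bar>) \<le> D * real d * (\<Sum>u\<in>UNIV. \<bar>g u\<bar>)"
proof -
  have "D \<ge> 0" using bound[of undefined undefined] by linarith
  have "(\<Sum>v\<in>UNIV. \<bar>e v u\<bar> * \<bar>g u\<bar>) \<le> D * real d * \<bar>g u\<bar>" for u
  proof -
    have "(\<Sum>v\<in>UNIV. \<bar>e v u\<bar> * \<bar>g u\<bar>) = (\<Sum>v\<in>S u. \<bar>e v u\<bar> * \<bar>g u\<bar>)"
      by (rule sum.mono_neutral_right) (use support in auto)
    also have "\<dots> \<le> (\<Sum>v\<in>S u. D * \<bar>g u\<bar>)"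
      by (intro sum_mono mult_right_mono bound) simp
    also have "\<dots> = real (card (S u)) * (D * \<bar>g u\<bar>)" by simp
    also have "\<dots> \<le> real d * (D * \<bar>g u\<bar>)"
      using in_degree[of u] \<open>D \<ge> 0\<close> by (intro mult_right_mono) simp_all
    also have "\<dots> = D * real d * \<bar>g u\<bar>" by simp
    finally show ?thesis .
  qed
  then have "(\<Sum>u\<in>UNIV. \<Sum>v\<in>UNIV. \<bar>e v u\<bar> * \<bar>g u\<bar>) \<le> (\<Sum>u\<in>UNIV. D * real d * \<bar>g u\<bar>)"
    by (rule sum_mono)
  then show ?thesis by (subst sum.swap) (simp add: sum_distrib_left)
qed

locale quasi_random_setting = ergodic_chain +
  fixes ord :: "'v::finite \<Rightarrow> 'v list"
  assumes reversible: "reversible P \<pi>"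
    and distinct_ord: "\<And>v. distinct (ord v)"
    and set_ord: "\<And>v. set (ord v) = nbhd P v"
begin

lemma router_row: "router_row P ord v"
  by unfold_locales (simp_all add: stochastic distinct_ord set_ord)

lemma pi_min_pos: "pi_min \<pi> > 0"
proof -
  have "pi_min \<pi> \<in> range \<pi>" unfolding pi_min_def by (rule Min_in) auto
  then show ?thesis using pi_pos by auto
qed

lemma pi_min_le: "pi_min \<pi> \<le> \<pi> u"
  unfolding pi_min_def by (rule Min_le) auto

text \<open>Reversibility makes the in-neighbourhoods equal to the out-neighbourhoods.\<close>

lemma card_in_nbhd_le: "card {v. P v u > 0} \<le> max_degree P"
proof -
  have "P v u > 0 \<longleftrightarrow> P u v > 0" for v
  proof -
    have "P v u > 0 \<longleftrightarrow> \<pi> v * P v u > 0" using pi_pos[of v] by (simp add: zero_less_mult_iff)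
    also have "\<dots> \<longleftrightarrow> \<pi> u * P u v > 0" using reversible by (simp add: reversible_def)
    also have "\<dots> \<longleftrightarrow> P u v > 0" using pi_pos[of u] by (simp add: zero_less_mult_iff)
    finally show ?thesis .
  qed
  then have "{v. P v u > 0} = nbhd P u" by (auto simp: nbhd_def)
  moreover have "card (nbhd P u) \<le> max_degree P" unfolding max_degree_def by (rule Max_ge) auto
  ultimately show ?thesis by simp
qed

lemma sum_abs_mpow_col_diff_le:
  "(\<Sum>u\<in>UNIV. \<bar>mpow P s u w - \<pi> w\<bar>) \<le> \<pi> w / pi_min \<pi> * (2 * dist_to_pi P \<pi> s w)"
proof -
  have "\<bar>mpow P s u w - \<pi> w\<bar> \<le> \<pi> w / pi_min \<pi> * \<bar>mpow P s w u - \<pi> u\<bar>" for u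
  proof -
    have "\<pi> u * mpow P s u w = \<pi> w * mpow P s w u" by (rule reversible_mpow[OF reversible])
    then have "mpow P s u w - \<pi> w = \<pi> w / \<pi> u * (mpow P s w u - \<pi> u)"
      using pi_pos[of u] by (simp add: field_simps)
    then have "\<bar>mpow P s u w - \<pi> w\<bar> = \<pi> w / \<pi> u * \<bar>mpow P s w u - \<pi> u\<bar>"
      using pi_pos[of u] pi_pos[of w] by (simp add: abs_mult)
    also have "\<dots> \<le> \<pi> w / pi_min \<pi> * \<bar>mpow P s w u - \<pi> u\<bar>"
      using pi_min_le[of u] pi_min_pos pi_pos[of w]
      by (intro mult_right_mono divide_left_mono) (simp_all add: less_imp_le)
    finally show ?thesis .
  qed
  then have "(\<Sum>u\<in>UNIV. \<bar>mpow P s u w - \<pi> w\<bar>) \<le> \<pi> w / pi_min \<pi> * (\<Sum>u\<in>UNIV. \<bar>mpow P s w u - \<pi> u\<bar>)"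
    by (simp add: sum_mono sum_distrib_left)
  then show ?thesis by (simp add: dist_to_pi_def dTV_def)
qed

lemma abs_route_err_le: "\<bar>route_err P ord chi0 t v u\<bar> \<le> 3/2 * log 2 (real (\<Sum>v\<in>UNIV. chi0 v) + 1)"
proof -
  interpret router_row P ord v by (rule router_row)
  have "\<bar>route_err P ord chi0 t v u\<bar> \<le> 3/2 * log 2 (real (qr_chi P ord chi0 t v) + 1)"
    unfolding route_err_def by (rule abs_Icount_error_le)
  also have "\<dots> \<le> 3/2 * log 2 (real (\<Sum>v\<in>UNIV. chi0 v) + 1)"
    using qr_chi_le_sum[of P ord chi0 t v] by (simp del: of_nat_sum)
  finally show ?thesis .
qed

lemma route_err_eq_0: "P v u = 0 \<Longrightarrow> route_err P ord chi0 t v u = 0"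
proof -
  interpret router_row P ord v by (rule router_row)
  assume "P v u = 0"
  then have "u \<notin> set (ord v)" using set_ord by (simp add: nbhd_def)
  with \<open>P v u = 0\<close> show ?thesis unfolding route_err_def by (simp add: Icount_eq_0)
qed

text \<open>Since each row of routing errors sums to \<open>0\<close>, the stationary value \<open>\<pi> w\<close> can be subtracted
  from the column of \<open>mpow P s\<close> before taking absolute values.\<close>

lemma abs_pushed_errors_le:
  "\<bar>\<Sum>u\<in>UNIV. (\<Sum>v\<in>UNIV. route_err P ord chi0 t v u) * mpow P s u w\<bar>
     \<le> 3/2 * log 2 (real (\<Sum>v\<in>UNIV. chi0 v) + 1) * real (max_degree P)
        * (\<pi> w / pi_min \<pi> * (2 * dist_to_pi P \<pi> s w))"
proof -
  let ?e = "route_err P ord chi0 t"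
  define g where "g u = mpow P s u w - \<pi> w" for u
  have "(\<Sum>u\<in>UNIV. (\<Sum>v\<in>UNIV. ?e v u) * mpow P s u w)
      = (\<Sum>v\<in>UNIV. \<Sum>u\<in>UNIV. ?e v u * g u) + \<pi> w * (\<Sum>v\<in>UNIV. \<Sum>u\<in>UNIV. ?e v u)"
    unfolding g_def
    by (simp add: algebra_simps sum.distrib sum_distrib_left sum_distrib_right sum_subtractf)
      (rule sum.swap)
  also have "(\<Sum>v\<in>UNIV. \<Sum>u\<in>UNIV. ?e v u) = 0"
    by (simp add: sum_route_err_eq_0[OF stochastic])
  finally have "\<bar>\<Sum>u\<in>UNIV. (\<Sum>v\<in>UNIV. ?e v u) * mpow P s u w\<bar>
      \<le> (\<Sum>v\<in>UNIV. \<Sum>u\<in>UNIV. \<bar>?e v u\<bar> * \<bar>g u\<bar>)"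
    by (simp add: abs_mult order_trans[OF sum_abs] sum_mono)
  also have "\<dots> \<le> 3/2 * log 2 (real (\<Sum>v\<in>UNIV. chi0 v) + 1) * real (max_degree P) * (\<Sum>u\<in>UNIV. \<bar>g u\<bar>)"
  proof (rule sum_abs_le_by_in_degree)
    show "\<bar>?e v u\<bar> \<le> 3/2 * log 2 (real (\<Sum>v\<in>UNIV. chi0 v) + 1)" for v u
      by (rule abs_route_err_le)
    show "v \<in> {v. P v u > 0}" if "?e v u \<noteq> 0" for v u
    proof -
      have "P v u \<noteq> 0" using that route_err_eq_0 by blast
      moreover have "P v u \<ge> 0" using stochastic by (simp add: stochastic_def)
      ultimately show ?thesis by simp
    qed
  qed (rule card_in_nbhd_le)
  also have "\<dots> \<le> 3/2 * log 2 (real (\<Sum>v\<in>UNIV. chi0 v) + 1) * real (max_degree P)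
        * (\<pi> w / pi_min \<pi> * (2 * dist_to_pi P \<pi> s w))"
    unfolding g_def by (intro mult_left_mono sum_abs_mpow_col_diff_le) (simp del: of_nat_sum)
  finally show ?thesis .
qed

end

theorem theorem5p7:
  fixes P :: "'v::finite \<Rightarrow> 'v \<Rightarrow> real"
    and \<pi> :: "'v \<Rightarrow> real"
    and ord :: "'v \<Rightarrow> 'v list"
    and chi0 :: "'v \<Rightarrow> nat"
    and M :: nat
  assumes "ergodic P"
    and "stationary P \<pi>"
    and "reversible P \<pi>"
    and "\<And>v. distinct (ord v)"
    and "\<And>v. set (ord v) = nbhd P v"
    and "(\<Sum>v\<in>UNIV. chi0 v) = M"
  shows "\<forall>w T. \<bar>real (qr_chi P ord chi0 T w) - qr_mu P chi0 T w\<bar>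
           \<le> 6 * \<pi> w / pi_min \<pi> * log 2 (real M + 1) * real (mixing_rate P \<pi>) * real (max_degree P)"
proof (intro allI)
  fix w T
  interpret quasi_random_setting P \<pi> ord
    by unfold_locales (use assms in simp_all)
  define K where "K = 3/2 * log 2 (real M + 1) * real (max_degree P) * (\<pi> w / pi_min \<pi>) * 2"
  have "K \<ge> 0" unfolding K_def using pi_pos[of w] pi_min_pos by simp
  have "\<bar>real (qr_chi P ord chi0 T w) - qr_mu P chi0 T w\<bar>
      = \<bar>\<Sum>t<T. \<Sum>u\<in>UNIV. (\<Sum>v\<in>UNIV. route_err P ord chi0 t v u) * mpow P (T - Suc t) u w\<bar>"
    by (simp add: qr_chi_eq_mu_plus_errors)
  also have "\<dots> \<le> (\<Sum>t<T. \<bar>\<Sum>u\<in>UNIV. (\<Sum>v\<in>UNIV. route_err P ord chi0 t v u) * mpow P (T - Suc t) u w\<bar>)"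
    by (rule sum_abs)
  also have "\<dots> \<le> (\<Sum>t<T. K * dist_to_pi P \<pi> (T - Suc t) w)"
    using abs_pushed_errors_le[of chi0 _ _ w] assms(6) by (intro sum_mono) (simp add: K_def ac_simps)
  also have "\<dots> = K * (\<Sum>s<T. dist_to_pi P \<pi> s w)"
    by (simp add: sum_distrib_left[symmetric] sum.nat_diff_reindex[of "\<lambda>s. dist_to_pi P \<pi> s w"])
  also have "\<dots> \<le> K * (2 * real (mixing_rate P \<pi>))"
    by (rule mult_left_mono[OF sum_dist_to_pi_le \<open>K \<ge> 0\<close>])
  finally show "\<bar>real (qr_chi P ord chi0 T w) - qr_mu P chi0 T w\<bar>
      \<le> 6 * \<pi> w / pi_min \<pi> * log 2 (real M + 1) * real (mixing_rate P \<pi>) * real (max_degree P)"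
    by (simp add: K_def ac_simps)
qed

end
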